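(* Let $C_1,\dots,C_T\in\mathbb{R}^{n\times n}$ be symmetric with $0\preceq C_t\preceq I$, $T\ge1$, and let $\mathscr{B}^n_1$ be the set of density matrices. Run the following algorithm: start from $Y_1\in\mathscr{B}^n_1$; at each $t$ eigendecompose $Y_t=\widehat D\mathrm{diag}(\sigma_t)\widehat D^\top$, play the unit vector $\widehat D[:,j]$ with probability $\sigma_{t,j}$, receive $C_t$, and update $V_{t+1}=\frac{\exp(\ln Y_t-\eta C_t)}{\mathrm{Tr}\exp(\ln Y_t-\eta C_t)}=\widehat U\mathrm{diag}(v_{t+1})\widehat U^\top$, $Y_{t+1}=\widehat U\mathrm{diag}(\frac\alpha n+(1-\alpha)v_{t+1})\widehat U^\top$, with $\alpha=\frac1{T+1}$ and $\eta=\frac{\sqrt{\ln(n(1+T))}}{\sqrt T}$. Then $$\max_{[r,s]\subset[1,T]}\Big\{\sum_{t=r}^s\mathrm{Tr}(Y_tC_t)-\min_{U\in\mathscr{B}^n_1}\sum_{t=r}^s\mathrm{Tr}(UC_t)\Big\}\le O\Big(\sqrt{T\ln(n(1+T))}\Big).$$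
   Context: $\ln,\exp$ denote matrix logarithm/exponential. $O(\cdot)$ hides an absolute constant. *)

theory Defs
  imports "Jordan_Normal_Form.Matrix"
begin

(* Real n x n matrices are represented by Jordan_Normal_Form's 'real mat'
   restricted to carrier_mat n n; the dimension n is an ordinary nat, so the
   hidden constant of O(.) can be quantified before n. *)

definition mtrace :: "real mat \<Rightarrow> real" where
  "mtrace A = (\<Sum>i<dim_row A. A $$ (i, i))"

definition sym_mat :: "real mat \<Rightarrow> bool" where
  "sym_mat A \<longleftrightarrow> A\<^sup>T = A"

definition psd_mat :: "nat \<Rightarrow> real mat \<Rightarrow> bool" where
  "psd_mat n A \<longleftrightarrow> A \<in> carrier_mat n n \<and> sym_mat A \<and>
     (\<forall>v \<in> carrier_vec n. 0 \<le> v \<bullet> (A *\<^sub>v v))"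

definition pd_mat :: "nat \<Rightarrow> real mat \<Rightarrow> bool" where
  "pd_mat n A \<longleftrightarrow> A \<in> carrier_mat n n \<and> sym_mat A \<and>
     (\<forall>v \<in> carrier_vec n. v \<noteq> 0\<^sub>v n \<longrightarrow> 0 < v \<bullet> (A *\<^sub>v v))"

definition loewner_le :: "nat \<Rightarrow> real mat \<Rightarrow> real mat \<Rightarrow> bool" where
  "loewner_le n A B \<longleftrightarrow> A \<in> carrier_mat n n \<and> B \<in> carrier_mat n n \<and> psd_mat n (B - A)"

definition density_mats :: "nat \<Rightarrow> real mat set" where
  "density_mats n = {A. psd_mat n A \<and> mtrace A = 1}"

definition orth_mat :: "nat \<Rightarrow> real mat \<Rightarrow> bool" where
  "orth_mat n Q \<longleftrightarrow> Q \<in> carrier_mat n n \<and> Q\<^sup>T * Q = 1\<^sub>m n"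

definition mat_fun :: "(real \<Rightarrow> real) \<Rightarrow> real mat \<Rightarrow> real mat" where
  "mat_fun f A = (SOME M. \<exists>Q lam. orth_mat (dim_row A) Q \<and>
      A = Q * mat_diag (dim_row A) lam * Q\<^sup>T \<and>
      M = Q * mat_diag (dim_row A) (\<lambda>j. f (lam j)) * Q\<^sup>T)"

definition mat_exp :: "real mat \<Rightarrow> real mat" where
  "mat_exp = mat_fun exp"

definition mat_ln :: "real mat \<Rightarrow> real mat" where
  "mat_ln = mat_fun ln"

end

theory Submission
  imports Defs "Jordan_Normal_Form.Spectral_Radius" "Jordan_Normal_Form.Schur_Decomposition"
begin

text \<open>
  For a comparator density matrix U, the potential Tr (U ln Y_t) gains in every round at least
  \<eta> (Tr (Y_t C_t) - Tr (U C_t)) + ln (1 - \<alpha>) - \<eta>^2/2. The matrix inequality behind this is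
  Tr exp (ln Y - \<eta> C) \<le> 1 - \<eta> Tr (Y C) + \<eta>^2/2 for a density matrix Y and 0 \<preceq> C \<preceq> I.
  It is proved without Golden-Thompson: after shifting ln Y by a multiple of the identity, the path
  K(s) = K - s C stays positive semidefinite for 0 \<le> s \<le> \<eta>, and each term Tr K(s)^m of the
  exponential series obeys a second-order Taylor bound, because its second derivative is a sum of
  terms Tr (C K(s)^j C K(s)^(m-2-j)), which are controlled by Tr K(0)^(m-2) when C is a contraction.
  Mixing with the uniform distribution keeps all eigenvalues of Y_t (t \<ge> 2) above \<alpha>/n, so the
  potential stays in [ln (\<alpha>/n), 0]; telescoping over any interval [r, s] bounds the regret by
  1 + (ln (n/\<alpha>) + T (\<eta>^2/2 - ln (1 - \<alpha>))) / \<eta>, which the choice of \<alpha> and \<eta> makes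
  O(sqrt (T ln (n (1 + T)))).
\<close>

section \<open>Spectral theorem for real symmetric matrices\<close>

lemma real_sym_mat_eigenvalue_real:
  fixes A :: "real mat"
  assumes A: "A \<in> carrier_mat n n" and sym: "A\<^sup>T = A"
    and v: "v \<in> carrier_vec n" "v \<noteq> 0\<^sub>v n"
    and ev: "map_mat complex_of_real A *\<^sub>v v = k \<cdot>\<^sub>v v"
  shows "Im k = 0"
proof -
  define S where "S = (\<Sum>i<n. \<Sum>j<n. cnj (v $ i) * of_real (A $$ (i, j)) * v $ j)"
  have row: "(\<Sum>j<n. of_real (A $$ (i, j)) * v $ j) = k * v $ i" if i: "i < n" for i
  proof -
    have "(map_mat complex_of_real A *\<^sub>v v) $ i = (\<Sum>j<n. of_real (A $$ (i, j)) * v $ j)"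
      using i A v by (auto simp: scalar_prod_def lessThan_atLeast0 intro!: sum.cong)
    then show ?thesis using ev i v by simp
  qed
  have "S = (\<Sum>i<n. cnj (v $ i) * (\<Sum>j<n. of_real (A $$ (i, j)) * v $ j))"
    unfolding S_def by (simp add: sum_distrib_left mult.assoc)
  also have "\<dots> = (\<Sum>i<n. k * (v $ i * cnj (v $ i)))"
    using row by (intro sum.cong refl) (simp add: mult_ac)
  also have "\<dots> = k * of_real (\<Sum>i<n. (cmod (v $ i))\<^sup>2)"
    by (simp only: sum_distrib_left of_real_sum complex_norm_square)
  finally have S_norm: "S = k * of_real (\<Sum>i<n. (cmod (v $ i))\<^sup>2)" .
  have symA: "A $$ (i, j) = A $$ (j, i)" if "i < n" "j < n" for i j
    using arg_cong[OF sym, of "\<lambda>M. M $$ (j, i)"] that A by auto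
  have "cnj S = (\<Sum>i<n. \<Sum>j<n. cnj (v $ j) * of_real (A $$ (j, i)) * v $ i)"
    unfolding S_def cnj_sum by (intro sum.cong refl) (simp add: symA mult_ac)
  also have "\<dots> = S" unfolding S_def by (rule sum.swap)
  finally have "Im (cnj S) = Im S" by simp
  then have "Im S = 0" by simp
  moreover obtain i where i: "i < n" "v $ i \<noteq> 0"
    using v by (metis eq_vecI carrier_vecD index_zero_vec)
  then have "0 < (\<Sum>i<n. (cmod (v $ i))\<^sup>2)" by (intro sum_pos2[of _ i]) auto
  ultimately show ?thesis unfolding S_norm by simp
qed

lemma real_eigenvector_of_complex:
  fixes A :: "real mat"
  assumes A: "A \<in> carrier_mat n n" and v: "v \<in> carrier_vec n" "v \<noteq> 0\<^sub>v n"
    and ev: "map_mat complex_of_real A *\<^sub>v v = complex_of_real e \<cdot>\<^sub>v v"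
  shows "\<exists>w. w \<in> carrier_vec n \<and> w \<noteq> 0\<^sub>v n \<and> A *\<^sub>v w = e \<cdot>\<^sub>v w"
proof -
  have row: "(\<Sum>j<n. of_real (A $$ (i, j)) * v $ j) = of_real e * v $ i" if i: "i < n" for i
  proof -
    have "(map_mat complex_of_real A *\<^sub>v v) $ i = (\<Sum>j<n. of_real (A $$ (i, j)) * v $ j)"
      using i A v by (auto simp: scalar_prod_def lessThan_atLeast0 intro!: sum.cong)
    then show ?thesis using ev i v by simp
  qed
  have "A *\<^sub>v map_vec f v = e \<cdot>\<^sub>v map_vec f v" if f: "f = Re \<or> f = Im" for f
  proof (rule eq_vecI)
    fix i assume "i < dim_vec (e \<cdot>\<^sub>v map_vec f v)"
    then have i: "i < n" using v by simp
    have "(A *\<^sub>v map_vec f v) $ i = f (\<Sum>j<n. of_real (A $$ (i, j)) * v $ j)"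
      using i A v f by (auto simp: scalar_prod_def lessThan_atLeast0 Re_sum Im_sum intro!: sum.cong)
    then show "(A *\<^sub>v map_vec f v) $ i = (e \<cdot>\<^sub>v map_vec f v) $ i"
      using i v f row[OF i] by auto
  qed (use A v in auto)
  moreover obtain i where i: "i < n" "v $ i \<noteq> 0"
    using v by (metis eq_vecI carrier_vecD index_zero_vec)
  then have "map_vec Re v \<noteq> 0\<^sub>v n \<or> map_vec Im v \<noteq> 0\<^sub>v n"
    using v by (metis complex_eqI index_map_vec(1) index_zero_vec(1) zero_complex.simps carrier_vecD)
  ultimately show ?thesis using v by (metis map_carrier_vec)
qed

definition normalized_vec :: "real vec \<Rightarrow> real vec" where
  "normalized_vec w = (1 / sqrt (w \<bullet> w)) \<cdot>\<^sub>v w"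

lemma scalar_prod_self_pos:
  fixes w :: "real vec"
  assumes "w \<in> carrier_vec n" "w \<noteq> 0\<^sub>v n"
  shows "0 < w \<bullet> w"
  using conjugate_square_greater_0_vec[OF assms(1)] assms(2) by simp

lemma scalar_prod_self_nonneg: "0 \<le> (w :: real vec) \<bullet> w"
  using conjugate_square_ge_0_vec[of w] by simp

lemma normalized_vec_carrier [simp]: "w \<in> carrier_vec n \<Longrightarrow> normalized_vec w \<in> carrier_vec n"
  unfolding normalized_vec_def by simp

lemma normalized_vec_unit:
  assumes "w \<in> carrier_vec n" "w \<noteq> 0\<^sub>v n"
  shows "normalized_vec w \<bullet> normalized_vec w = 1"
  using assms scalar_prod_self_pos[OF assms] unfolding normalized_vec_def
  by (simp add: scalar_prod_smult_left scalar_prod_smult_right)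

lemma real_sym_mat_unit_eigenvector:
  fixes A :: "real mat"
  assumes A: "A \<in> carrier_mat n n" and sym: "A\<^sup>T = A" and n: "n > 0"
  shows "\<exists>e u. u \<in> carrier_vec n \<and> u \<bullet> u = 1 \<and> A *\<^sub>v u = e \<cdot>\<^sub>v u"
proof -
  have AC: "map_mat complex_of_real A \<in> carrier_mat n n" using A by simp
  obtain k where "k \<in> spectrum (map_mat complex_of_real A)" using spectrum_non_empty[OF AC n] by blast
  then obtain v where v: "v \<in> carrier_vec n" "v \<noteq> 0\<^sub>v n"
    and ev: "map_mat complex_of_real A *\<^sub>v v = k \<cdot>\<^sub>v v"
    unfolding spectrum_def eigenvalue_def eigenvector_def using AC by auto
  have "k = complex_of_real (Re k)"
    using real_sym_mat_eigenvalue_real[OF A sym v ev] by (simp add: complex_eqI)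
  then obtain w where w: "w \<in> carrier_vec n" "w \<noteq> 0\<^sub>v n" "A *\<^sub>v w = Re k \<cdot>\<^sub>v w"
    using real_eigenvector_of_complex[OF A v] ev by metis
  have "A *\<^sub>v normalized_vec w = Re k \<cdot>\<^sub>v normalized_vec w"
    unfolding normalized_vec_def using w A by (simp add: mult_mat_vec smult_smult_assoc mult.commute)
  then show ?thesis using w normalized_vec_unit[OF w(1,2)] by (intro exI[of _ "Re k"]) auto
qed

lemma mat_diag_dims [simp]: "dim_row (mat_diag n f) = n" "dim_col (mat_diag n f) = n"
  unfolding mat_diag_def by simp_all

lemma mult_carrier_mat_square [simp]:
  "A \<in> carrier_mat n n \<Longrightarrow> B \<in> carrier_mat n n \<Longrightarrow> A * B \<in> carrier_mat n n"
  by (rule mult_carrier_mat)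

lemma orth_matD:
  assumes "orth_mat n Q"
  shows "Q \<in> carrier_mat n n" "Q\<^sup>T \<in> carrier_mat n n" "Q\<^sup>T * Q = 1\<^sub>m n" "Q * Q\<^sup>T = 1\<^sub>m n"
  using assms mat_mult_left_right_inverse[of "Q\<^sup>T" n Q] unfolding orth_mat_def by auto

lemma orth_mat_col_inner:
  assumes "orth_mat n Q" "i < n" "j < n"
  shows "col Q i \<bullet> col Q j = (if i = j then 1 else 0)"
proof -
  have "col Q i \<bullet> col Q j = (Q\<^sup>T * Q) $$ (i, j)" using orth_matD(1)[OF assms(1)] assms by simp
  then show ?thesis using orth_matD(3)[OF assms(1)] assms by simp
qed

lemma orth_mat_cancel [simp]:
  assumes "orth_mat n Q" "X \<in> carrier_mat n n"
  shows "Q\<^sup>T * (Q * X) = X" "Q * (Q\<^sup>T * X) = X"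
  using assms orth_matD[OF assms(1)]
  by (simp_all add: assoc_mult_mat[symmetric, of "Q\<^sup>T" n n Q n X n] assoc_mult_mat[symmetric, of Q n n "Q\<^sup>T" n X n])

lemma orth_mat_mult:
  assumes P: "orth_mat n P" and Q: "orth_mat n Q"
  shows "orth_mat n (P * Q)"
proof -
  note p = orth_matD[OF P] and q = orth_matD[OF Q]
  have "(P * Q)\<^sup>T * (P * Q) = Q\<^sup>T * (P\<^sup>T * (P * Q))"
    using p q by (simp add: transpose_mult[of _ n n] assoc_mult_mat[of _ n n _ n _ n])
  also have "\<dots> = 1\<^sub>m n" using P q by simp
  finally show ?thesis using p q unfolding orth_mat_def by simp
qed

lemma transpose_sym_conj:
  fixes Q A :: "'a :: comm_ring_1 mat"
  assumes Q: "Q \<in> carrier_mat m n" and A: "A \<in> carrier_mat n n" and sym: "A\<^sup>T = A"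
  shows "(Q * A * Q\<^sup>T)\<^sup>T = Q * A * Q\<^sup>T"
proof -
  have "(Q * A * Q\<^sup>T)\<^sup>T = (Q\<^sup>T)\<^sup>T * (Q * A)\<^sup>T"
    by (rule transpose_mult) (use Q A in auto)
  also have "(Q * A)\<^sup>T = A\<^sup>T * Q\<^sup>T" by (rule transpose_mult) (use Q A in auto)
  finally show ?thesis using Q A sym by (simp add: assoc_mult_mat[of _ m n _ n _ m])
qed

lemma orth_mat_one_block:
  assumes P: "orth_mat m P"
  shows "orth_mat (Suc m) (four_block_mat (1\<^sub>m 1) (0\<^sub>m 1 m) (0\<^sub>m m 1) P)"
proof -
  note p = orth_matD[OF P]
  let ?B = "four_block_mat (1\<^sub>m 1) (0\<^sub>m 1 m) (0\<^sub>m m 1) P"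
  have BT: "?B\<^sup>T = four_block_mat (1\<^sub>m 1) (0\<^sub>m 1 m) (0\<^sub>m m 1) P\<^sup>T"
    using p transpose_four_block_mat[of "1\<^sub>m 1" 1 1 "0\<^sub>m 1 m" m "0\<^sub>m m 1" m P] by simp
  have "?B\<^sup>T * ?B = four_block_mat (1\<^sub>m 1) (0\<^sub>m 1 m) (0\<^sub>m m 1) (P\<^sup>T * P)"
    unfolding BT using p by (subst mult_four_block_mat) auto
  moreover have "?B \<in> carrier_mat (Suc m) (Suc m)"
    using p by (metis four_block_carrier_mat one_carrier_mat plus_1_eq_Suc)
  ultimately show ?thesis unfolding orth_mat_def using p four_block_one_mat[of 1 m] by simp
qed

lemma orth_mat_of_orthogonal_cols:
  fixes ws :: "real vec list"
  assumes ws: "set ws \<subseteq> carrier_vec n" "corthogonal ws" "length ws = n"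
  shows "orth_mat n (mat_of_cols n (map normalized_vec ws))"
proof -
  define W where "W = mat_of_cols n (map normalized_vec ws)"
  have W: "W \<in> carrier_mat n n" unfolding W_def using ws(3) by (metis length_map mat_of_cols_carrier(1))
  have col: "col W i = normalized_vec (ws ! i)" if "i < n" for i
  proof -
    have "ws ! i \<in> carrier_vec n" using ws that by (metis nth_mem subsetD)
    then show ?thesis unfolding W_def using that ws by (subst col_mat_of_cols) auto
  qed
  have inner: "normalized_vec (ws ! i) \<bullet> normalized_vec (ws ! j) = (if i = j then 1 else 0)"
    if i: "i < n" and j: "j < n" for i j
  proof -
    have c: "ws ! i \<in> carrier_vec n" "ws ! j \<in> carrier_vec n" using ws i j by auto
    have "ws ! i \<bullet> ws ! j = 0 \<longleftrightarrow> i \<noteq> j" using corthogonalD[OF ws(2)] ws i j by simp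
    then show ?thesis using c scalar_prod_self_nonneg[of "ws ! i"] unfolding normalized_vec_def
      by (auto simp: scalar_prod_smult_left scalar_prod_smult_right)
  qed
  have "W\<^sup>T * W = 1\<^sub>m n"
    by (rule eq_matI) (use W col inner in auto)
  then show ?thesis using W unfolding W_def orth_mat_def by simp
qed

lemma unit_vec_orth_completion:
  fixes u :: "real vec"
  assumes u: "u \<in> carrier_vec n" and uu: "u \<bullet> u = 1" and n: "n > 0"
  shows "\<exists>W. orth_mat n W \<and> col W 0 = u"
proof -
  interpret cof_vec_space n "TYPE(real)" .
  have u0: "u \<noteq> 0\<^sub>v n" using uu u by auto
  define b where "b = basis_completion u"
  from basis_completion[OF u u0, folded b_def]
  have b: "set b \<subseteq> carrier_vec n" "distinct b" "\<not> lin_dep (set b)" "hd b = u" "length b = n" by auto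
  then obtain vs where bv: "b = u # vs" using n by (cases b) auto
  define ws where "ws = gram_schmidt n b"
  from gram_schmidt_result[OF b(1-3) ws_def]
  have ws: "set ws \<subseteq> carrier_vec n" "corthogonal ws" "length ws = n" by (auto simp: b(5))
  have "ws ! 0 = u" using u n unfolding ws_def bv by (metis gram_schmidt_hd hd_conv_nth ws(3) ws_def bv
        gr_implies_not0 list.size(3))
  then have "col (mat_of_cols n (map normalized_vec ws)) 0 = u"
    using ws n u uu by (subst col_mat_of_cols) (auto simp: normalized_vec_def)
  then show ?thesis using orth_mat_of_orthogonal_cols[OF ws] by blast
qed

lemma sym_mat_first_col_block:
  fixes A :: "'a :: comm_ring_1 mat"
  assumes A: "A \<in> carrier_mat (Suc m) (Suc m)" and sym: "A\<^sup>T = A"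
    and col0: "\<And>i. i < Suc m \<Longrightarrow> A $$ (i, 0) = (if i = 0 then e else 0)"
  shows "\<exists>B. B \<in> carrier_mat m m \<and> B\<^sup>T = B \<and> A = four_block_mat (mat_diag 1 (\<lambda>_. e)) (0\<^sub>m 1 m) (0\<^sub>m m 1) B"
proof -
  have entry_sym: "A $$ (j, i) = A $$ (i, j)" if "i < Suc m" "j < Suc m" for i j
    using arg_cong[OF sym, of "\<lambda>M. M $$ (i, j)"] A that by simp
  define B where "B = mat m m (\<lambda>(i, j). A $$ (Suc i, Suc j))"
  have "B\<^sup>T = B" unfolding B_def by (rule eq_matI) (auto simp: entry_sym)
  moreover have "A = four_block_mat (mat_diag 1 (\<lambda>_. e)) (0\<^sub>m 1 m) (0\<^sub>m m 1) B"
  proof (rule eq_matI)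
    fix i j assume "i < dim_row (four_block_mat (mat_diag 1 (\<lambda>_. e)) (0\<^sub>m 1 m) (0\<^sub>m m 1) B)"
      "j < dim_col (four_block_mat (mat_diag 1 (\<lambda>_. e)) (0\<^sub>m 1 m) (0\<^sub>m m 1) B)"
    then have ij: "i < Suc m" "j < Suc m" unfolding B_def by auto
    show "A $$ (i, j) = four_block_mat (mat_diag 1 (\<lambda>_. e)) (0\<^sub>m 1 m) (0\<^sub>m m 1) B $$ (i, j)"
      using col0[OF ij(1)] col0[OF ij(2)] entry_sym[OF ij] ij unfolding B_def
      by (cases i; cases j) (auto simp: mat_diag_def)
  qed (use A B_def in auto)
  moreover have "B \<in> carrier_mat m m" unfolding B_def by simp
  ultimately show ?thesis by blast
qed

lemma orth_conj_eigenvector_deflation: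
  fixes A :: "real mat"
  assumes A: "A \<in> carrier_mat (Suc m) (Suc m)" and sym: "A\<^sup>T = A"
    and W: "orth_mat (Suc m) W" and u: "col W 0 = u" and ev: "A *\<^sub>v u = e \<cdot>\<^sub>v u"
  shows "\<exists>B. B \<in> carrier_mat m m \<and> B\<^sup>T = B \<and>
    W\<^sup>T * A * W = four_block_mat (mat_diag 1 (\<lambda>_. e)) (0\<^sub>m 1 m) (0\<^sub>m m 1) B"
proof (rule sym_mat_first_col_block)
  note w = orth_matD[OF W]
  show "W\<^sup>T * A * W \<in> carrier_mat (Suc m) (Suc m)" using w A by auto
  show "(W\<^sup>T * A * W)\<^sup>T = W\<^sup>T * A * W" using transpose_sym_conj[OF w(2) A sym] w by simp
  fix i assume i: "i < Suc m"
  have "(W\<^sup>T * A * W) $$ (i, 0) = col W i \<bullet> col (A * W) 0"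
    using w A i by (simp add: assoc_mult_mat[of _ "Suc m" "Suc m" _ "Suc m" _ "Suc m"])
  also have "col (A * W) 0 = A *\<^sub>v col W 0" using A w by (intro eq_vecI) auto
  also have "\<dots> = e \<cdot>\<^sub>v col W 0" using ev u by simp
  finally show "(W\<^sup>T * A * W) $$ (i, 0) = (if i = 0 then e else 0)"
    using orth_mat_col_inner[OF W i, of 0] w by (simp add: scalar_prod_smult_right)
qed

lemma one_block_conj:
  fixes P D :: "'a :: comm_ring_1 mat"
  assumes P: "P \<in> carrier_mat m m" and D1: "D1 \<in> carrier_mat 1 1" and D: "D \<in> carrier_mat m m"
  shows "four_block_mat (1\<^sub>m 1) (0\<^sub>m 1 m) (0\<^sub>m m 1) P * four_block_mat D1 (0\<^sub>m 1 m) (0\<^sub>m m 1) D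
      * (four_block_mat (1\<^sub>m 1) (0\<^sub>m 1 m) (0\<^sub>m m 1) P)\<^sup>T
    = four_block_mat D1 (0\<^sub>m 1 m) (0\<^sub>m m 1) (P * D * P\<^sup>T)"
proof -
  have "(four_block_mat (1\<^sub>m 1) (0\<^sub>m 1 m) (0\<^sub>m m 1) P)\<^sup>T = four_block_mat (1\<^sub>m 1) (0\<^sub>m 1 m) (0\<^sub>m m 1) P\<^sup>T"
    using P transpose_four_block_mat[of "1\<^sub>m 1" 1 1 "0\<^sub>m 1 m" m "0\<^sub>m m 1" m P] by simp
  moreover have "four_block_mat (1\<^sub>m 1) (0\<^sub>m 1 m) (0\<^sub>m m 1) P * four_block_mat D1 (0\<^sub>m 1 m) (0\<^sub>m m 1) D
      = four_block_mat D1 (0\<^sub>m 1 m) (0\<^sub>m m 1) (P * D)"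
    using P D1 D by (subst mult_four_block_mat[OF one_carrier_mat zero_carrier_mat zero_carrier_mat P D1
          zero_carrier_mat zero_carrier_mat D]) auto
  moreover have "four_block_mat D1 (0\<^sub>m 1 m) (0\<^sub>m m 1) (P * D) * four_block_mat (1\<^sub>m 1) (0\<^sub>m 1 m) (0\<^sub>m m 1) P\<^sup>T
      = four_block_mat D1 (0\<^sub>m 1 m) (0\<^sub>m m 1) (P * D * P\<^sup>T)"
    using P D1 D by (subst mult_four_block_mat[OF D1 zero_carrier_mat zero_carrier_mat _ one_carrier_mat
          zero_carrier_mat zero_carrier_mat]) auto
  ultimately show ?thesis by simp
qed

theorem real_sym_mat_spectral:
  fixes A :: "real mat"
  assumes "A \<in> carrier_mat n n" and "A\<^sup>T = A"
  shows "\<exists>Q lam. orth_mat n Q \<and> A = Q * mat_diag n lam * Q\<^sup>T"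
  using assms
proof (induction n arbitrary: A)
  case 0
  then have "A = 1\<^sub>m 0 * mat_diag 0 (\<lambda>_. 0) * (1\<^sub>m 0)\<^sup>T" by (intro eq_matI) auto
  then show ?case unfolding orth_mat_def by fastforce
next
  case (Suc m A)
  obtain e u where u: "u \<in> carrier_vec (Suc m)" "u \<bullet> u = 1" "A *\<^sub>v u = e \<cdot>\<^sub>v u"
    using real_sym_mat_unit_eigenvector[OF Suc.prems] by blast
  obtain W where W: "orth_mat (Suc m) W" and Wu: "col W 0 = u"
    using unit_vec_orth_completion[OF u(1,2)] by blast
  obtain B where B: "B \<in> carrier_mat m m" "B\<^sup>T = B"
    and WAW: "W\<^sup>T * A * W = four_block_mat (mat_diag 1 (\<lambda>_. e)) (0\<^sub>m 1 m) (0\<^sub>m m 1) B"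
    using orth_conj_eigenvector_deflation[OF Suc.prems W Wu u(3)] by blast
  obtain P lam where P: "orth_mat m P" and BP: "B = P * mat_diag m lam * P\<^sup>T"
    using Suc.IH[OF B] by blast
  define E where "E = four_block_mat (1\<^sub>m 1) (0\<^sub>m 1 m) (0\<^sub>m m 1) P"
  define lam' where "lam' i = (if i = 0 then e else lam (i - 1))" for i
  have diag: "mat_diag (Suc m) lam' = four_block_mat (mat_diag 1 (\<lambda>_. e)) (0\<^sub>m 1 m) (0\<^sub>m m 1) (mat_diag m lam)"
    unfolding lam'_def by (rule eq_matI) (auto simp: mat_diag_def)
  note w = orth_matD[OF W] and e = orth_matD[OF orth_mat_one_block[OF P, folded E_def]]
  have "(W * E) * mat_diag (Suc m) lam' * (W * E)\<^sup>T = W * (E * mat_diag (Suc m) lam' * E\<^sup>T) * W\<^sup>T"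
    using w e by (simp add: transpose_mult[of _ "Suc m" "Suc m"] assoc_mult_mat[of _ "Suc m" "Suc m" _ "Suc m" _ "Suc m"])
  also have "E * mat_diag (Suc m) lam' * E\<^sup>T = W\<^sup>T * A * W"
    unfolding diag WAW BP E_def using orth_matD(1)[OF P] by (intro one_block_conj) auto
  also have "W * (W\<^sup>T * A * W) * W\<^sup>T = A"
    using W w Suc.prems by (simp add: assoc_mult_mat[of _ "Suc m" "Suc m" _ "Suc m" _ "Suc m"])
  finally show ?case using orth_mat_mult[OF W orth_mat_one_block[OF P]] unfolding E_def by metis
qed

lemma mtrace_comm:
  fixes A B :: "real mat"
  assumes A: "A \<in> carrier_mat n m" and B: "B \<in> carrier_mat m n"
  shows "mtrace (A * B) = mtrace (B * A)"
proof -
  have "mtrace (A * B) = (\<Sum>i<n. \<Sum>k<m. A $$ (i, k) * B $$ (k, i))"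
    unfolding mtrace_def using A B by (auto simp: scalar_prod_def lessThan_atLeast0 intro!: sum.cong)
  also have "\<dots> = (\<Sum>k<m. \<Sum>i<n. B $$ (k, i) * A $$ (i, k))"
    by (subst sum.swap) (simp add: mult.commute)
  also have "\<dots> = mtrace (B * A)"
    unfolding mtrace_def using A B by (auto simp: scalar_prod_def lessThan_atLeast0 intro!: sum.cong)
  finally show ?thesis .
qed

lemma mtrace_mat_diag: "mtrace (mat_diag n a) = (\<Sum>i<n. a i)"
  unfolding mtrace_def mat_diag_def by auto

lemma mtrace_add: "A \<in> carrier_mat n n \<Longrightarrow> B \<in> carrier_mat n n \<Longrightarrow> mtrace (A + B) = mtrace A + mtrace B"
  unfolding mtrace_def by (auto simp: sum.distrib)

lemma mtrace_minus: "A \<in> carrier_mat n n \<Longrightarrow> B \<in> carrier_mat n n \<Longrightarrow> mtrace (A - B) = mtrace A - mtrace B"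
  unfolding mtrace_def by (auto simp: sum_subtractf)

lemma mtrace_smult: "A \<in> carrier_mat n n \<Longrightarrow> mtrace (c \<cdot>\<^sub>m A) = c * mtrace A"
  unfolding mtrace_def by (auto simp: sum_distrib_left)

lemma mtrace_mult_add:
  "A \<in> carrier_mat n n \<Longrightarrow> B \<in> carrier_mat n n \<Longrightarrow> C \<in> carrier_mat n n \<Longrightarrow>
    mtrace (A * (B + C)) = mtrace (A * B) + mtrace (A * C)"
  by (simp add: mult_add_distrib_mat[of _ n n _ n] mtrace_add[of _ n])

lemma mtrace_mult_minus_smult:
  fixes U A C :: "real mat"
  assumes U: "U \<in> carrier_mat n n" and A: "A \<in> carrier_mat n n" and C: "C \<in> carrier_mat n n"
  shows "mtrace (U * (A - e \<cdot>\<^sub>m C)) = mtrace (U * A) - e * mtrace (U * C)"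
proof -
  have "U * (A - e \<cdot>\<^sub>m C) = U * A - U * (e \<cdot>\<^sub>m C)"
    by (rule mult_minus_distrib_mat) (use U A C in auto)
  also have "U * (e \<cdot>\<^sub>m C) = e \<cdot>\<^sub>m (U * C)" by (rule mult_smult_distrib) (use U C in auto)
  finally show ?thesis using U A C by (simp add: mtrace_minus[of _ n] mtrace_smult[of _ n])
qed

section \<open>Orthogonally diagonalised matrices\<close>

definition orth_diag :: "nat \<Rightarrow> real mat \<Rightarrow> (nat \<Rightarrow> real) \<Rightarrow> real mat" where
  "orth_diag n Q a = Q * mat_diag n a * Q\<^sup>T"

lemma real_sym_mat_orth_diag:
  assumes "A \<in> carrier_mat n n" "A\<^sup>T = A"
  obtains Q a where "orth_mat n Q" "A = orth_diag n Q a"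
  using real_sym_mat_spectral[OF assms] unfolding orth_diag_def by blast

lemma orth_diag_carrier [simp]: "orth_mat n Q \<Longrightarrow> orth_diag n Q a \<in> carrier_mat n n"
  unfolding orth_diag_def orth_mat_def by auto

lemma orth_diag_dims [simp]:
  "orth_mat n Q \<Longrightarrow> dim_row (orth_diag n Q a) = n" "orth_mat n Q \<Longrightarrow> dim_col (orth_diag n Q a) = n"
  using orth_diag_carrier by (auto simp del: orth_diag_carrier)

lemma orth_diag_cong: "(\<And>i. i < n \<Longrightarrow> a i = b i) \<Longrightarrow> orth_diag n Q a = orth_diag n Q b"
proof -
  assume "\<And>i. i < n \<Longrightarrow> a i = b i"
  then have "mat_diag n a = mat_diag n b" by (intro eq_matI) (auto simp: mat_diag_def)
  then show ?thesis unfolding orth_diag_def by simp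
qed

lemma mat_diag_mult_assoc [simp]:
  "X \<in> carrier_mat n k \<Longrightarrow> mat_diag n a * (mat_diag n b * X) = mat_diag n (\<lambda>i. a i * b i) * X"
  using assoc_mult_mat[symmetric, of "mat_diag n a" n n "mat_diag n b" n X k] by simp

lemma orth_diag_transpose: "orth_mat n Q \<Longrightarrow> (orth_diag n Q a)\<^sup>T = orth_diag n Q a"
proof -
  assume Q: "orth_mat n Q"
  have "(mat_diag n a)\<^sup>T = mat_diag n a" by (rule eq_matI) (auto simp: mat_diag_def)
  then show ?thesis unfolding orth_diag_def using transpose_sym_conj[OF orth_matD(1)[OF Q], of "mat_diag n a"]
    by simp
qed

lemma orth_diag_mult: "orth_mat n Q \<Longrightarrow> orth_diag n Q a * orth_diag n Q b = orth_diag n Q (\<lambda>i. a i * b i)"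
proof -
  assume Q: "orth_mat n Q"
  note q = orth_matD[OF Q]
  have "orth_diag n Q a * orth_diag n Q b = Q * mat_diag n a * (Q\<^sup>T * Q) * mat_diag n b * Q\<^sup>T"
    unfolding orth_diag_def using q Q by (simp add: assoc_mult_mat[of _ n n _ n _ n])
  then show ?thesis unfolding orth_diag_def using q Q by (simp add: assoc_mult_mat[of _ n n _ n _ n])
qed

lemma orth_diag_add: "orth_mat n Q \<Longrightarrow> orth_diag n Q a + orth_diag n Q b = orth_diag n Q (\<lambda>i. a i + b i)"
proof -
  assume Q: "orth_mat n Q"
  note q = orth_matD[OF Q]
  have "mat_diag n a + mat_diag n b = mat_diag n (\<lambda>i. a i + b i)" by (rule eq_matI) (auto simp: mat_diag_def)
  moreover have "Q * mat_diag n a * Q\<^sup>T + Q * mat_diag n b * Q\<^sup>T = Q * (mat_diag n a + mat_diag n b) * Q\<^sup>T"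
    using q by (simp add: add_mult_distrib_mat[of _ n n _ _ n] mult_add_distrib_mat[of _ n n _ n])
  ultimately show ?thesis unfolding orth_diag_def by simp
qed

lemma orth_diag_smult: "orth_mat n Q \<Longrightarrow> c \<cdot>\<^sub>m orth_diag n Q a = orth_diag n Q (\<lambda>i. c * a i)"
proof -
  assume Q: "orth_mat n Q"
  note q = orth_matD[OF Q]
  have "c \<cdot>\<^sub>m mat_diag n a = mat_diag n (\<lambda>i. c * a i)" by (rule eq_matI) (auto simp: mat_diag_def)
  moreover have "c \<cdot>\<^sub>m (Q * mat_diag n a * Q\<^sup>T) = Q * (c \<cdot>\<^sub>m mat_diag n a) * Q\<^sup>T"
    using q by (simp add: mult_smult_distrib[of _ n n _ n] mult_smult_assoc_mat[of _ n n _ n])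
  ultimately show ?thesis unfolding orth_diag_def by simp
qed

lemma orth_diag_one: "orth_mat n Q \<Longrightarrow> orth_diag n Q (\<lambda>_. 1) = 1\<^sub>m n"
  unfolding orth_diag_def using orth_matD[of n Q] by simp

lemma orth_diag_const: "orth_mat n Q \<Longrightarrow> orth_diag n Q (\<lambda>_. c) = c \<cdot>\<^sub>m 1\<^sub>m n"
  using orth_diag_smult[of n Q c "\<lambda>_. 1"] by (simp add: orth_diag_one)

lemma orth_diag_pow: "orth_mat n Q \<Longrightarrow> (orth_diag n Q a) ^\<^sub>m l = orth_diag n Q (\<lambda>i. a i ^ l)"
proof (induction l)
  case 0 then show ?case using orth_diag_one[OF 0] by simp
next
  case (Suc l)
  then have "orth_diag n Q a ^\<^sub>m Suc l = orth_diag n Q (\<lambda>i. a i ^ l) * orth_diag n Q a" by simp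
  also have "\<dots> = orth_diag n Q (\<lambda>i. a i ^ Suc l)" using orth_diag_mult[OF Suc.prems] by (simp add: mult.commute)
  finally show ?case .
qed

lemma mtrace_orth_diag: "orth_mat n Q \<Longrightarrow> mtrace (orth_diag n Q a) = (\<Sum>i<n. a i)"
proof -
  assume Q: "orth_mat n Q"
  note q = orth_matD[OF Q]
  have "mtrace (orth_diag n Q a) = mtrace (Q * (mat_diag n a * Q\<^sup>T))"
    unfolding orth_diag_def using q by (simp add: assoc_mult_mat[of _ n n _ n _ n])
  also have "\<dots> = mtrace ((mat_diag n a * Q\<^sup>T) * Q)" by (rule mtrace_comm[of _ n n]) (use q in auto)
  also have "\<dots> = mtrace (mat_diag n a)" using q Q by (simp add: assoc_mult_mat[of _ n n _ n _ n])
  finally show ?thesis by (simp add: mtrace_mat_diag)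
qed

lemma mtrace_mult_orth_diag:
  assumes Q: "orth_mat n Q" and M: "M \<in> carrier_mat n n"
  shows "mtrace (M * orth_diag n Q a) = (\<Sum>i<n. a i * (col Q i \<bullet> (M *\<^sub>v col Q i)))"
proof -
  note q = orth_matD[OF Q]
  have "mtrace (M * orth_diag n Q a) = mtrace ((M * Q) * (mat_diag n a * Q\<^sup>T))"
    unfolding orth_diag_def using q M by (simp add: assoc_mult_mat[of _ n n _ n _ n])
  also have "\<dots> = mtrace ((mat_diag n a * Q\<^sup>T) * (M * Q))"
    by (rule mtrace_comm[of _ n n]) (use q M in auto)
  also have "\<dots> = mtrace (mat_diag n a * (Q\<^sup>T * (M * Q)))"
    using q M by (simp add: assoc_mult_mat[of _ n n _ n _ n])
  also have "\<dots> = (\<Sum>i<n. a i * (Q\<^sup>T * (M * Q)) $$ (i, i))"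
    unfolding mtrace_def using q M by (simp add: mat_diag_mult_left[of _ n n])
  also have "\<dots> = (\<Sum>i<n. a i * (col Q i \<bullet> (M *\<^sub>v col Q i)))"
  proof (intro sum.cong refl arg_cong[where f = "\<lambda>x. a _ * x"])
    fix i assume "i \<in> {..<n}"
    then have i: "i < n" by simp
    have "col (M * Q) i = M *\<^sub>v col Q i" using i q M by (intro eq_vecI) auto
    then show "(Q\<^sup>T * (M * Q)) $$ (i, i) = col Q i \<bullet> (M *\<^sub>v col Q i)" using i q M by simp
  qed
  finally show ?thesis .
qed

lemma quad_form_mat_diag:
  fixes a :: "nat \<Rightarrow> real"
  assumes "w \<in> carrier_vec n"
  shows "w \<bullet> (mat_diag n a *\<^sub>v w) = (\<Sum>i<n. a i * (w $ i)\<^sup>2)"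
proof -
  have "mat_diag n a *\<^sub>v w = vec n (\<lambda>i. a i * w $ i)"
    using assms by (intro eq_vecI)
      (auto simp: mat_diag_def scalar_prod_def if_distrib[where f = "\<lambda>x. x * _"] sum.delta' cong: if_cong)
  then show ?thesis using assms
    by (auto simp: scalar_prod_def lessThan_atLeast0 power2_eq_square intro!: sum.cong)
qed

lemma quad_form_orth_diag:
  assumes Q: "orth_mat n Q" and v: "v \<in> carrier_vec n"
  shows "v \<bullet> (orth_diag n Q a *\<^sub>v v) = (\<Sum>i<n. a i * (col Q i \<bullet> v)\<^sup>2)"
proof -
  note q = orth_matD[OF Q]
  define w where "w = Q\<^sup>T *\<^sub>v v"
  have w: "w \<in> carrier_vec n" and wi: "\<And>i. i < n \<Longrightarrow> w $ i = col Q i \<bullet> v"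
    unfolding w_def using q v by auto
  have "v \<bullet> (orth_diag n Q a *\<^sub>v v) = v \<bullet> (Q *\<^sub>v (mat_diag n a *\<^sub>v w))"
    unfolding orth_diag_def w_def using q v by (simp add: assoc_mult_mat_vec[of _ n n _ n])
  also have "\<dots> = w \<bullet> (mat_diag n a *\<^sub>v w)"
    using transpose_vec_mult_scalar[OF q(1) mult_mat_vec_carrier[OF mat_diag_dim w] v] unfolding w_def by simp
  finally show ?thesis using quad_form_mat_diag[OF w] wi by simp
qed

lemma sum_sq_orth_coords:
  assumes "orth_mat n Q" "v \<in> carrier_vec n"
  shows "(\<Sum>i<n. (col Q i \<bullet> v)\<^sup>2) = v \<bullet> v"
  using quad_form_orth_diag[OF assms, of "\<lambda>_. 1"] orth_diag_one[OF assms(1)] assms(2) by simp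

lemma orth_diag_col_quad:
  assumes Q: "orth_mat n Q" and j: "j < n"
  shows "col Q j \<bullet> (orth_diag n Q a *\<^sub>v col Q j) = a j"
proof -
  have "col Q j \<bullet> (orth_diag n Q a *\<^sub>v col Q j) = (\<Sum>i<n. a i * (col Q i \<bullet> col Q j)\<^sup>2)"
    using quad_form_orth_diag[OF Q] orth_matD(1)[OF Q] j by simp
  also have "\<dots> = (\<Sum>i<n. if i = j then a j else 0)"
    using orth_mat_col_inner[OF Q _ j] by (intro sum.cong) auto
  finally show ?thesis using j by simp
qed

lemma psd_orth_diag_iff:
  assumes Q: "orth_mat n Q"
  shows "psd_mat n (orth_diag n Q a) \<longleftrightarrow> (\<forall>i<n. 0 \<le> a i)"
proof
  assume "psd_mat n (orth_diag n Q a)"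
  then show "\<forall>i<n. 0 \<le> a i"
    using orth_diag_col_quad[OF Q] orth_matD(1)[OF Q] unfolding psd_mat_def by (metis col_carrier_vec carrier_matD(1))
next
  assume "\<forall>i<n. 0 \<le> a i"
  then show "psd_mat n (orth_diag n Q a)"
    unfolding psd_mat_def sym_mat_def using Q orth_diag_transpose[OF Q]
    by (auto simp: quad_form_orth_diag intro!: sum_nonneg)
qed

lemma psd_mat_orth_diag:
  assumes "psd_mat n A"
  obtains Q a where "orth_mat n Q" "A = orth_diag n Q a" "\<forall>i<n. 0 \<le> a i"
proof -
  obtain Q a where "orth_mat n Q" "A = orth_diag n Q a"
    using assms real_sym_mat_orth_diag unfolding psd_mat_def sym_mat_def by blast
  then show ?thesis using that assms psd_orth_diag_iff by blast
qed

lemma psd_one_minus_orth_diag_iff: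
  assumes Q: "orth_mat n Q"
  shows "psd_mat n (1\<^sub>m n - orth_diag n Q a) \<longleftrightarrow> (\<forall>i<n. a i \<le> 1)"
proof -
  have "orth_diag n Q (\<lambda>i. 1 - a i) = orth_diag n Q (\<lambda>_. 1) + (- 1) \<cdot>\<^sub>m orth_diag n Q a"
    using orth_diag_add[OF Q, of "\<lambda>_. 1" "\<lambda>i. - 1 * a i"] orth_diag_smult[OF Q, of "- 1" a] by simp
  also have "\<dots> = 1\<^sub>m n - orth_diag n Q a" using Q by (intro eq_matI) (auto simp: orth_diag_one)
  finally show ?thesis using psd_orth_diag_iff[OF Q, of "\<lambda>i. 1 - a i"] by simp
qed

lemma orth_diag_fun_unique:
  assumes Q1: "orth_mat n Q1" and Q2: "orth_mat n Q2"
    and eq: "orth_diag n Q1 a1 = orth_diag n Q2 a2"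
  shows "orth_diag n Q1 (\<lambda>j. f (a1 j)) = orth_diag n Q2 (\<lambda>j. f (a2 j))"
proof -
  note q1 = orth_matD[OF Q1] and q2 = orth_matD[OF Q2]
  define R where "R = Q2\<^sup>T * Q1"
  have R: "R \<in> carrier_mat n n" unfolding R_def using q1 q2 by simp
  have "R * mat_diag n a1 = Q2\<^sup>T * orth_diag n Q1 a1 * Q1"
    unfolding R_def orth_diag_def using q1 q2 Q1 by (simp add: assoc_mult_mat[of _ n n _ n _ n])
  also have "\<dots> = mat_diag n a2 * R"
    unfolding eq unfolding R_def orth_diag_def using q1 q2 Q2 by (simp add: assoc_mult_mat[of _ n n _ n _ n])
  finally have RD: "R * mat_diag n a1 = mat_diag n a2 * R" .
  \<comment> \<open>An entry of R linking a1 j to a2 i can only be nonzero when a1 j = a2 i.\<close>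
  have RDf: "R * mat_diag n (\<lambda>j. f (a1 j)) = mat_diag n (\<lambda>j. f (a2 j)) * R"
  proof (rule eq_matI)
    fix i j assume "i < dim_row (mat_diag n (\<lambda>j. f (a2 j)) * R)" "j < dim_col (mat_diag n (\<lambda>j. f (a2 j)) * R)"
    then have ij: "i < n" "j < n" using R by auto
    have "R $$ (i, j) * a1 j = a2 i * R $$ (i, j)"
      using arg_cong[OF RD, of "\<lambda>M. M $$ (i, j)"] ij R
      by (simp add: mat_diag_mult_right[OF R] mat_diag_mult_left[OF R])
    then have "R $$ (i, j) * f (a1 j) = f (a2 i) * R $$ (i, j)" by (cases "R $$ (i, j) = 0") auto
    then show "(R * mat_diag n (\<lambda>j. f (a1 j))) $$ (i, j) = (mat_diag n (\<lambda>j. f (a2 j)) * R) $$ (i, j)"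
      using ij R by (simp add: mat_diag_mult_right[OF R] mat_diag_mult_left[OF R])
  qed (use R in auto)
  have "orth_diag n Q1 (\<lambda>j. f (a1 j)) = Q2 * (R * mat_diag n (\<lambda>j. f (a1 j))) * Q1\<^sup>T"
    unfolding orth_diag_def R_def using q1 q2 Q2 by (simp add: assoc_mult_mat[of _ n n _ n _ n])
  also have "\<dots> = Q2 * mat_diag n (\<lambda>j. f (a2 j)) * (R * Q1\<^sup>T)"
    unfolding RDf using q1 q2 R by (simp add: assoc_mult_mat[of _ n n _ n _ n])
  also have "R * Q1\<^sup>T = Q2\<^sup>T" unfolding R_def using q1 q2 Q1 by (simp add: assoc_mult_mat[of _ n n _ n _ n])
  finally show ?thesis unfolding orth_diag_def .
qed

lemma mat_fun_orth_diag:
  assumes Q: "orth_mat n Q"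
  shows "mat_fun f (orth_diag n Q a) = orth_diag n Q (\<lambda>j. f (a j))"
proof -
  let ?P = "\<lambda>M. \<exists>Q' a'. orth_mat n Q' \<and> orth_diag n Q a = Q' * mat_diag n a' * Q'\<^sup>T \<and>
      M = Q' * mat_diag n (\<lambda>j. f (a' j)) * Q'\<^sup>T"
  have "?P (orth_diag n Q (\<lambda>j. f (a j)))" using Q unfolding orth_diag_def by blast
  then have "?P (SOME M. ?P M)" by (rule someI)
  then obtain Q' a' where Q': "orth_mat n Q'" and eq: "orth_diag n Q a = orth_diag n Q' a'"
    and M: "(SOME M. ?P M) = orth_diag n Q' (\<lambda>j. f (a' j))" unfolding orth_diag_def by blast
  have "mat_fun f (orth_diag n Q a) = (SOME M. ?P M)" unfolding mat_fun_def using Q by simp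
  also have "\<dots> = orth_diag n Q (\<lambda>j. f (a j))" unfolding M using orth_diag_fun_unique[OF Q' Q eq[symmetric]] .
  finally show ?thesis .
qed

lemma mat_fun_carrier:
  assumes "A \<in> carrier_mat n n" "A\<^sup>T = A"
  shows "mat_fun f A \<in> carrier_mat n n"
proof -
  obtain Q a where "orth_mat n Q" "A = orth_diag n Q a" using real_sym_mat_orth_diag[OF assms] .
  then show ?thesis by (simp add: mat_fun_orth_diag)
qed

lemma psd_mat_quad_nonneg: "psd_mat n U \<Longrightarrow> v \<in> carrier_vec n \<Longrightarrow> 0 \<le> v \<bullet> (U *\<^sub>v v)"
  unfolding psd_mat_def by blast

lemma mtrace_mult_orth_diag_mono:
  assumes Q: "orth_mat n Q" and U: "psd_mat n U" and le: "\<And>i. i < n \<Longrightarrow> a i \<le> b i"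
  shows "mtrace (U * orth_diag n Q a) \<le> mtrace (U * orth_diag n Q b)"
proof -
  have "U \<in> carrier_mat n n" using U unfolding psd_mat_def by simp
  then show ?thesis unfolding mtrace_mult_orth_diag[OF Q \<open>U \<in> carrier_mat n n\<close>]
    using le psd_mat_quad_nonneg[OF U] orth_matD(1)[OF Q] by (auto intro!: sum_mono mult_right_mono)
qed

lemma mtrace_mult_orth_diag_const:
  "orth_mat n Q \<Longrightarrow> U \<in> carrier_mat n n \<Longrightarrow> mtrace (U * orth_diag n Q (\<lambda>_. c)) = c * mtrace U"
  by (simp add: orth_diag_const mult_smult_distrib[of _ n n _ n] mtrace_smult[of _ n])

lemma mtrace_mult_orth_diag_shift:
  assumes Q: "orth_mat n Q" and U: "U \<in> carrier_mat n n"
  shows "mtrace (U * orth_diag n Q (\<lambda>i. c + a i)) = c * mtrace U + mtrace (U * orth_diag n Q a)"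
  using orth_diag_add[OF Q, of "\<lambda>_. c" a, symmetric] mtrace_mult_orth_diag_const[OF Q U]
  by (simp add: mtrace_mult_add[of _ n] Q U)

lemma mtrace_mult_psd_nonneg:
  assumes U: "psd_mat n U" and C: "psd_mat n C"
  shows "0 \<le> mtrace (U * C)"
proof -
  obtain S g where S: "orth_mat n S" and CS: "C = orth_diag n S g" and g: "\<forall>i<n. 0 \<le> g i"
    using psd_mat_orth_diag[OF C] .
  have "0 = mtrace (U * orth_diag n S (\<lambda>_. 0))"
    using mtrace_mult_orth_diag_const[OF S] U unfolding psd_mat_def by simp
  also have "\<dots> \<le> mtrace (U * C)" unfolding CS using g by (intro mtrace_mult_orth_diag_mono[OF S U]) auto
  finally show ?thesis .
qed

lemma mtrace_mult_le_mtrace: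
  assumes Y: "psd_mat n Y" and C: "C \<in> carrier_mat n n" and C1: "psd_mat n (1\<^sub>m n - C)"
  shows "mtrace (Y * C) \<le> mtrace Y"
proof -
  have Yc: "Y \<in> carrier_mat n n" using Y unfolding psd_mat_def by simp
  have "0 \<le> mtrace (Y * (1\<^sub>m n - C))" by (rule mtrace_mult_psd_nonneg[OF Y C1])
  also have "Y * (1\<^sub>m n - C) = Y - Y * C"
    using Yc by (subst mult_minus_distrib_mat[OF Yc one_carrier_mat C]) simp
  finally show ?thesis using Yc C by (simp add: mtrace_minus[of _ n])
qed

section \<open>Derivatives of matrix powers\<close>

lemma pow_mat_carrier_square [simp]: "A \<in> carrier_mat n n \<Longrightarrow> A ^\<^sub>m l \<in> carrier_mat n n"
  by (induction l) auto

lemma pow_mat_add: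
  assumes A: "(A :: real mat) \<in> carrier_mat n n"
  shows "A ^\<^sub>m a * A ^\<^sub>m b = A ^\<^sub>m (a + b)"
proof (induction b)
  case 0 then show ?case using A by simp
next
  case (Suc b)
  have "A ^\<^sub>m a * A ^\<^sub>m Suc b = (A ^\<^sub>m a * A ^\<^sub>m b) * A"
    using A by (simp add: assoc_mult_mat[of _ n n _ n _ n])
  then show ?case using Suc by simp
qed

definition mat_has_derivative :: "nat \<Rightarrow> (real \<Rightarrow> real mat) \<Rightarrow> real mat \<Rightarrow> real \<Rightarrow> bool" where
  "mat_has_derivative n F D x \<longleftrightarrow>
     (\<forall>i<n. \<forall>j<n. ((\<lambda>s. F s $$ (i, j)) has_real_derivative D $$ (i, j)) (at x))"

lemma mat_has_derivative_affine:
  assumes K0: "K0 \<in> carrier_mat n n" and C: "C \<in> carrier_mat n n"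
  shows "mat_has_derivative n (\<lambda>s. K0 - s \<cdot>\<^sub>m C) ((- 1) \<cdot>\<^sub>m C) x"
  unfolding mat_has_derivative_def
proof (intro allI impI)
  fix i j assume ij: "i < n" "j < n"
  have "((\<lambda>s. K0 $$ (i, j) - s * C $$ (i, j)) has_real_derivative (- 1) * C $$ (i, j)) (at x)"
    by (auto intro!: derivative_eq_intros)
  then show "((\<lambda>s. (K0 - s \<cdot>\<^sub>m C) $$ (i, j)) has_real_derivative ((- 1) \<cdot>\<^sub>m C) $$ (i, j)) (at x)"
    using K0 C ij by simp
qed

lemma mat_has_derivative_mult:
  assumes F: "\<And>s. F s \<in> carrier_mat n n" and G: "\<And>s. G s \<in> carrier_mat n n"
    and DF: "DF \<in> carrier_mat n n" and DG: "DG \<in> carrier_mat n n"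
    and dF: "mat_has_derivative n F DF x" and dG: "mat_has_derivative n G DG x"
  shows "mat_has_derivative n (\<lambda>s. F s * G s) (DF * G x + F x * DG) x"
  unfolding mat_has_derivative_def
proof (intro allI impI)
  fix i j assume i: "i < n" and j: "j < n"
  have entry: "(F s * G s) $$ (i, j) = (\<Sum>k<n. F s $$ (i, k) * G s $$ (k, j))" for s
    using F[of s] G[of s] i j by (auto simp: scalar_prod_def lessThan_atLeast0 intro!: sum.cong)
  have "((\<lambda>s. \<Sum>k<n. F s $$ (i, k) * G s $$ (k, j)) has_real_derivative
      (\<Sum>k<n. DF $$ (i, k) * G x $$ (k, j) + F x $$ (i, k) * DG $$ (k, j))) (at x)"
    using dF dG i j unfolding mat_has_derivative_def
    by (intro DERIV_sum) (auto intro!: derivative_eq_intros)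
  moreover have "(DF * G x + F x * DG) $$ (i, j)
      = (\<Sum>k<n. DF $$ (i, k) * G x $$ (k, j) + F x $$ (i, k) * DG $$ (k, j))"
    using F[of x] G[of x] DF DG i j by (auto simp: scalar_prod_def lessThan_atLeast0 sum.distrib intro!: sum.cong)
  ultimately show "((\<lambda>s. (F s * G s) $$ (i, j)) has_real_derivative (DF * G x + F x * DG) $$ (i, j)) (at x)"
    unfolding entry by simp
qed

fun pow_mat_deriv :: "nat \<Rightarrow> real mat \<Rightarrow> real mat \<Rightarrow> nat \<Rightarrow> real mat" where
  "pow_mat_deriv n A DA 0 = 0\<^sub>m n n"
| "pow_mat_deriv n A DA (Suc l) = pow_mat_deriv n A DA l * A + A ^\<^sub>m l * DA"

lemma pow_mat_deriv_carrier [simp]: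
  "A \<in> carrier_mat n n \<Longrightarrow> DA \<in> carrier_mat n n \<Longrightarrow> pow_mat_deriv n A DA l \<in> carrier_mat n n"
  by (induction l) auto

lemma mat_has_derivative_pow:
  assumes F: "\<And>s. F s \<in> carrier_mat n n" and DF: "DF \<in> carrier_mat n n"
    and dF: "mat_has_derivative n F DF x"
  shows "mat_has_derivative n (\<lambda>s. F s ^\<^sub>m l) (pow_mat_deriv n (F x) DF l) x"
proof (induction l)
  case 0
  then show ?case using F[THEN carrier_matD(1)] unfolding mat_has_derivative_def by auto
next
  case (Suc l)
  show ?case using mat_has_derivative_mult[OF _ F _ DF Suc dF] F DF by simp
qed

lemma mtrace_has_derivative:
  assumes A: "A \<in> carrier_mat n n" and F: "\<And>s. F s \<in> carrier_mat n n" and D: "D \<in> carrier_mat n n"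
    and dF: "mat_has_derivative n F D x"
  shows "((\<lambda>s. mtrace (A * F s)) has_real_derivative mtrace (A * D)) (at x)"
proof -
  have entries: "mtrace (A * M) = (\<Sum>i<n. \<Sum>k<n. A $$ (i, k) * M $$ (k, i))" if "M \<in> carrier_mat n n" for M
    using A that unfolding mtrace_def by (auto simp: scalar_prod_def lessThan_atLeast0 intro!: sum.cong)
  have "((\<lambda>s. \<Sum>i<n. \<Sum>k<n. A $$ (i, k) * F s $$ (k, i)) has_real_derivative
      (\<Sum>i<n. \<Sum>k<n. A $$ (i, k) * D $$ (k, i))) (at x)"
    using dF unfolding mat_has_derivative_def by (intro DERIV_sum DERIV_cmult) auto
  then show ?thesis using entries[OF D] entries[OF F] by simp
qed

lemma mtrace_mult_pow_mat_deriv: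
  assumes K: "K \<in> carrier_mat n n" and C: "C \<in> carrier_mat n n" and A: "A \<in> carrier_mat n n"
  shows "mtrace (A * pow_mat_deriv n K ((- 1) \<cdot>\<^sub>m C) l)
    = - (\<Sum>j<l. mtrace (A * K ^\<^sub>m j * C * K ^\<^sub>m (l - 1 - j)))"
  using A
proof (induction l arbitrary: A)
  case 0 then show ?case using C K by (simp add: mtrace_def)
next
  case (Suc l A)
  let ?D = "pow_mat_deriv n K ((- 1) \<cdot>\<^sub>m C) l"
  have D: "?D \<in> carrier_mat n n" using K C by simp
  \<comment> \<open>Cyclicity of the trace moves the last factor K to the front, where the induction hypothesis applies.\<close>
  have "mtrace (A * (?D * K)) = mtrace ((K * A) * ?D)"
    using Suc.prems K D mtrace_comm[of "A * ?D" n n K] by (simp add: assoc_mult_mat[of _ n n _ n _ n])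
  also have "\<dots> = - (\<Sum>j<l. mtrace (A * K ^\<^sub>m j * C * K ^\<^sub>m (Suc l - 1 - j)))"
  proof -
    have "mtrace (K * A * K ^\<^sub>m j * C * K ^\<^sub>m (l - 1 - j)) = mtrace (A * K ^\<^sub>m j * C * K ^\<^sub>m (Suc l - 1 - j))"
      if j: "j < l" for j
    proof -
      have "K ^\<^sub>m (l - 1 - j) * K = K ^\<^sub>m (Suc l - 1 - j)"
        using j pow_mat_add[OF K, of "l - 1 - j" 1] K by (simp add: Suc_diff_Suc)
      then show ?thesis
        using Suc.prems K C mtrace_comm[of K n n "A * K ^\<^sub>m j * C * K ^\<^sub>m (l - 1 - j)"]
        by (simp add: assoc_mult_mat[of _ n n _ n _ n])
    qed
    then show ?thesis using Suc.IH[of "K * A"] Suc.prems K by simp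
  qed
  finally have "mtrace (A * (?D * K)) = - (\<Sum>j<l. mtrace (A * K ^\<^sub>m j * C * K ^\<^sub>m (Suc l - 1 - j)))" .
  moreover have "mtrace (A * (K ^\<^sub>m l * ((- 1) \<cdot>\<^sub>m C))) = - mtrace (A * K ^\<^sub>m l * C * K ^\<^sub>m (Suc l - 1 - l))"
    using Suc.prems K C
    by (simp add: mult_smult_distrib[of _ n n _ n] assoc_mult_mat[of _ n n _ n _ n] mtrace_smult[of _ n])
  ultimately show ?case
    using Suc.prems K C D by (simp add: mtrace_mult_add[of _ n] lessThan_Suc)
qed

section \<open>A second-order bound for the trace of the exponential\<close>

lemma mixed_pow_sum_le:
  fixes x y :: real
  assumes x: "0 \<le> x" and y: "0 \<le> y"
  shows "(\<Sum>j<Suc l. x ^ (l - j) * y ^ j) \<le> real (Suc l) * (x ^ l + y ^ l) / 2"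
proof -
  have pair: "x ^ (l - j) * y ^ j + x ^ j * y ^ (l - j) \<le> x ^ l + y ^ l" if j: "j \<le> l" for j
  proof -
    have "0 \<le> (x ^ j - y ^ j) * (x ^ (l - j) - y ^ (l - j))"
    proof (cases "x \<le> y")
      case True
      then have "x ^ j \<le> y ^ j" "x ^ (l - j) \<le> y ^ (l - j)" using x by (auto intro: power_mono)
      then show ?thesis by (simp add: mult_nonpos_nonpos)
    next
      case False
      then have "y ^ j \<le> x ^ j" "y ^ (l - j) \<le> x ^ (l - j)" using y by (auto intro: power_mono)
      then show ?thesis by simp
    qed
    moreover have "x ^ l = x ^ j * x ^ (l - j)" "y ^ l = y ^ j * y ^ (l - j)"
      using j by (simp_all add: power_add[symmetric])
    ultimately show ?thesis by (simp add: algebra_simps)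
  qed
  have "(\<Sum>j=0..l. x ^ (l - j) * y ^ j) = (\<Sum>j=0..l. x ^ j * y ^ (l - j))"
    by (subst sum.atLeastAtMost_rev) (auto intro!: sum.cong)
  then have "2 * (\<Sum>j=0..l. x ^ (l - j) * y ^ j) = (\<Sum>j=0..l. x ^ (l - j) * y ^ j + x ^ j * y ^ (l - j))"
    by (simp add: sum.distrib)
  also have "\<dots> \<le> (\<Sum>j=0..l. x ^ l + y ^ l)" using pair by (intro sum_mono) auto
  finally show ?thesis by (simp add: atLeast0AtMost lessThan_Suc_atMost)
qed

lemma double_sum_mixed_pow_le:
  fixes E :: "nat \<Rightarrow> nat \<Rightarrow> real" and k :: "nat \<Rightarrow> real"
  assumes E_sym: "\<And>a b. a < n \<Longrightarrow> b < n \<Longrightarrow> E a b = E b a"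
    and E_nonneg: "\<And>a b. 0 \<le> E a b"
    and E_row: "\<And>a. a < n \<Longrightarrow> (\<Sum>b<n. E a b) \<le> 1"
    and k: "\<And>a. a < n \<Longrightarrow> 0 \<le> k a"
  shows "(\<Sum>a<n. \<Sum>b<n. E a b * (\<Sum>j<Suc l. k a ^ (l - j) * k b ^ j)) \<le> real (Suc l) * (\<Sum>a<n. k a ^ l)"
proof -
  have "(\<Sum>a<n. \<Sum>b<n. E a b * (\<Sum>j<Suc l. k a ^ (l - j) * k b ^ j))
      \<le> (\<Sum>a<n. \<Sum>b<n. E a b * (real (Suc l) * (k a ^ l + k b ^ l) / 2))"
    using k E_nonneg mixed_pow_sum_le by (intro sum_mono mult_left_mono) auto
  also have "\<dots> = (\<Sum>a<n. \<Sum>b<n. real (Suc l) / 2 * (E a b * k a ^ l) + real (Suc l) / 2 * (E a b * k b ^ l))"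
    by (intro sum.cong refl) (simp add: field_simps)
  also have "\<dots> = real (Suc l) / 2 * ((\<Sum>a<n. \<Sum>b<n. E a b * k a ^ l) + (\<Sum>a<n. \<Sum>b<n. E a b * k b ^ l))"
    by (simp only: sum.distrib sum_distrib_left distrib_left)
  also have "(\<Sum>a<n. \<Sum>b<n. E a b * k b ^ l) = (\<Sum>a<n. \<Sum>b<n. E a b * k a ^ l)"
    by (subst sum.swap) (use E_sym in \<open>auto intro!: sum.cong\<close>)
  also have "(\<Sum>a<n. \<Sum>b<n. E a b * k a ^ l) = (\<Sum>a<n. k a ^ l * (\<Sum>b<n. E a b))"
    by (simp add: sum_distrib_left mult_ac)
  also have "\<dots> \<le> (\<Sum>a<n. k a ^ l)"
    using k E_row by (intro sum_mono) (auto intro: mult_left_le)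
  finally show ?thesis by simp
qed

lemma second_order_taylor_upper_bound:
  fixes f f1 f2 :: "real \<Rightarrow> real"
  assumes h: "0 \<le> h"
    and d1: "\<And>s. (f has_real_derivative f1 s) (at s)"
    and d2: "\<And>s. (f1 has_real_derivative f2 s) (at s)"
    and f2_le: "\<And>s. 0 \<le> s \<Longrightarrow> s \<le> h \<Longrightarrow> f2 s \<le> M"
  shows "f h \<le> f 0 + h * f1 0 + h\<^sup>2 / 2 * M"
proof -
  define g where "g s = f1 s - f1 0 - s * M" for s
  have dg: "(g has_real_derivative (f2 s - M)) (at s)" for s
    unfolding g_def by (auto intro!: derivative_eq_intros d2)
  have g_le: "g x \<le> 0" if "0 \<le> x" "x \<le> h" for x
  proof -
    have "g x \<le> g 0"
      by (rule DERIV_nonpos_imp_nonincreasing[OF that(1)]) (use dg f2_le that in force)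
    then show ?thesis unfolding g_def by simp
  qed
  define r where "r s = f s - f 0 - s * f1 0 - s\<^sup>2 / 2 * M" for s
  have dr: "(r has_real_derivative g s) (at s)" for s
    unfolding r_def g_def by (auto intro!: derivative_eq_intros d1 simp: power2_eq_square algebra_simps)
  have "r h \<le> r 0"
    by (rule DERIV_nonpos_imp_nonincreasing[OF h]) (use dr g_le in force)
  then show ?thesis unfolding r_def by simp
qed

lemma transpose_minus_smult_sym:
  assumes "A \<in> carrier_mat n n" "C \<in> carrier_mat n n" "A\<^sup>T = A" "C\<^sup>T = C"
  shows "(A - s \<cdot>\<^sub>m C)\<^sup>T = A - s \<cdot>\<^sub>m C"
proof -
  have "(s \<cdot>\<^sub>m C)\<^sup>T = s \<cdot>\<^sub>m C\<^sup>T" by (rule eq_matI) auto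
  then show ?thesis using assms by (simp add: transpose_minus)
qed

lemma psd_mat_add: "psd_mat n A \<Longrightarrow> psd_mat n B \<Longrightarrow> psd_mat n (A + B)"
  unfolding psd_mat_def sym_mat_def
  by (auto simp: transpose_add add_mult_distrib_mat_vec[of _ n n] scalar_prod_add_distrib[of _ n])

lemma smult_mat_mult_vec:
  "A \<in> carrier_mat nr nc \<Longrightarrow> v \<in> carrier_vec nc \<Longrightarrow> (c \<cdot>\<^sub>m A) *\<^sub>v v = c \<cdot>\<^sub>v (A *\<^sub>v v)"
  by (intro eq_vecI) (auto simp: scalar_prod_def sum_distrib_left mult.assoc)

lemma psd_mat_smult:
  assumes "psd_mat n A" "0 \<le> c"
  shows "psd_mat n (c \<cdot>\<^sub>m A)"
proof -
  have "(c \<cdot>\<^sub>m A)\<^sup>T = c \<cdot>\<^sub>m A\<^sup>T" by (rule eq_matI) auto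
  then show ?thesis using assms unfolding psd_mat_def sym_mat_def
    by (auto simp: smult_mat_mult_vec scalar_prod_smult_right)
qed

lemma psd_mat_one: "psd_mat n (1\<^sub>m n)"
  unfolding psd_mat_def sym_mat_def by (simp add: scalar_prod_self_nonneg)

lemma norm_mult_vec_le_of_psd_le_one:
  assumes C0: "psd_mat n C" and C1: "psd_mat n (1\<^sub>m n - C)" and r: "r \<in> carrier_vec n"
  shows "(C *\<^sub>v r) \<bullet> (C *\<^sub>v r) \<le> r \<bullet> r"
proof -
  obtain S g where S: "orth_mat n S" and CS: "C = orth_diag n S g" and g0: "\<forall>i<n. 0 \<le> g i"
    using psd_mat_orth_diag[OF C0] .
  have g1: "\<forall>i<n. g i \<le> 1" using C1 psd_one_minus_orth_diag_iff[OF S] unfolding CS by blast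
  have Cc: "C \<in> carrier_mat n n" and symC: "C\<^sup>T = C" using C0 unfolding psd_mat_def sym_mat_def by auto
  have "(C *\<^sub>v r) \<bullet> (C *\<^sub>v r) = r \<bullet> ((C * C) *\<^sub>v r)"
    using transpose_vec_mult_scalar[of C n n "C *\<^sub>v r" r] Cc symC r by simp
  also have "\<dots> = (\<Sum>i<n. (g i * g i) * (col S i \<bullet> r)\<^sup>2)"
    unfolding CS orth_diag_mult[OF S] by (rule quad_form_orth_diag[OF S r])
  also have "\<dots> \<le> (\<Sum>i<n. (col S i \<bullet> r)\<^sup>2)"
  proof (rule sum_mono)
    fix i assume "i \<in> {..<n}"
    then have "g i * g i \<le> 1" using g0 g1 by (simp add: mult_le_one)
    then show "g i * g i * (col S i \<bullet> r)\<^sup>2 \<le> (col S i \<bullet> r)\<^sup>2"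
      using mult_right_mono[of "g i * g i" 1 "(col S i \<bullet> r)\<^sup>2"] by simp
  qed
  also have "\<dots> = r \<bullet> r" by (rule sum_sq_orth_coords[OF S r])
  finally show ?thesis .
qed

lemma mtrace_mult_exp_series:
  assumes A: "A \<in> carrier_mat n n" and symA: "A\<^sup>T = A" and M: "M \<in> carrier_mat n n"
  shows "(\<lambda>m. mtrace (M * A ^\<^sub>m m) / fact m) sums mtrace (M * mat_exp A)"
proof -
  obtain R k where R: "orth_mat n R" and AR: "A = orth_diag n R k"
    using real_sym_mat_orth_diag[OF A symA] by blast
  define w where "w i = col R i \<bullet> (M *\<^sub>v col R i)" for i
  have exp_series: "(\<lambda>m. x ^ m / fact m) sums exp x" for x :: real
    using exp_converges[of x] by (simp add: divide_inverse mult.commute scaleR_conv_of_real)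
  have "(\<lambda>m. \<Sum>i<n. k i ^ m / fact m * w i) sums (\<Sum>i<n. exp (k i) * w i)"
    using exp_series by (intro sums_sum sums_mult2)
  moreover have "mtrace (M * A ^\<^sub>m m) / fact m = (\<Sum>i<n. k i ^ m / fact m * w i)" for m
    unfolding AR orth_diag_pow[OF R] mtrace_mult_orth_diag[OF R M] w_def by (simp add: sum_divide_distrib)
  moreover have "mtrace (M * mat_exp A) = (\<Sum>i<n. exp (k i) * w i)"
    unfolding AR mat_exp_def mat_fun_orth_diag[OF R] mtrace_mult_orth_diag[OF R M] w_def ..
  ultimately show ?thesis by simp
qed

lemma sums_fact_shift:
  assumes "(\<lambda>m. a m / fact m) sums S"
  shows "(\<lambda>m. real m * a (m - 1) / fact m) sums (S :: real)"
proof -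
  have "(\<lambda>m. real (Suc m) * a (Suc m - 1) / fact (Suc m)) = (\<lambda>m. a m / fact m)"
    by (simp add: divide_simps)
  then show ?thesis using assms sums_Suc_iff[of "\<lambda>m. real m * a (m - 1) / fact m"] by simp
qed

locale psd_affine_path =
  fixes n :: nat and K0 C :: "real mat" and \<eta> :: real
  assumes K0: "K0 \<in> carrier_mat n n" and K0_ge: "psd_mat n (K0 - \<eta> \<cdot>\<^sub>m 1\<^sub>m n)"
    and C0: "psd_mat n C" and C1: "psd_mat n (1\<^sub>m n - C)" and \<eta>: "0 \<le> \<eta>"
begin

definition path :: "real \<Rightarrow> real mat" where
  "path s = K0 - s \<cdot>\<^sub>m C"

definition pow_trace :: "nat \<Rightarrow> real \<Rightarrow> real" where
  "pow_trace l s = mtrace (path s ^\<^sub>m l)"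

definition weighted_pow_trace :: "nat \<Rightarrow> real \<Rightarrow> real" where
  "weighted_pow_trace l s = mtrace (C * path s ^\<^sub>m l)"

lemma C: "C \<in> carrier_mat n n" and symC: "C\<^sup>T = C"
  using C0 unfolding psd_mat_def sym_mat_def by auto

lemma path_carrier [simp]: "path s \<in> carrier_mat n n"
  unfolding path_def using C by (intro minus_carrier_mat smult_carrier_mat)

lemma path_psd:
  assumes "0 \<le> s" "s \<le> \<eta>"
  shows "psd_mat n (path s)"
proof -
  have "path s = (K0 - \<eta> \<cdot>\<^sub>m 1\<^sub>m n) + (s \<cdot>\<^sub>m (1\<^sub>m n - C) + (\<eta> - s) \<cdot>\<^sub>m 1\<^sub>m n)"
    unfolding path_def using K0 C by (intro eq_matI) (auto simp: algebra_simps)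
  then show ?thesis using assms K0_ge C1
    by (simp add: psd_mat_add psd_mat_smult psd_mat_one)
qed

lemma path_has_derivative: "mat_has_derivative n path ((- 1) \<cdot>\<^sub>m C) x"
  unfolding path_def[abs_def] by (rule mat_has_derivative_affine[OF K0 C])

lemma pow_trace_has_derivative:
  "(pow_trace l has_real_derivative - (real l * weighted_pow_trace (l - 1) s)) (at s)"
proof -
  have "((\<lambda>s. mtrace (1\<^sub>m n * path s ^\<^sub>m l)) has_real_derivative
      mtrace (1\<^sub>m n * pow_mat_deriv n (path s) ((- 1) \<cdot>\<^sub>m C) l)) (at s)"
    by (rule mtrace_has_derivative[OF one_carrier_mat _ _ mat_has_derivative_pow[OF _ _ path_has_derivative]])
      (use C in auto)
  moreover have "mtrace (1\<^sub>m n * path s ^\<^sub>m j * C * path s ^\<^sub>m (l - 1 - j)) = weighted_pow_trace (l - 1) s"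
    if j: "j < l" for j
  proof -
    let ?P = "path s"
    have "mtrace (1\<^sub>m n * ?P ^\<^sub>m j * C * ?P ^\<^sub>m (l - 1 - j)) = mtrace (?P ^\<^sub>m j * (C * ?P ^\<^sub>m (l - 1 - j)))"
      using C by (simp add: assoc_mult_mat[of _ n n _ n _ n] left_mult_one_mat[of _ n n])
    also have "\<dots> = mtrace ((C * ?P ^\<^sub>m (l - 1 - j)) * ?P ^\<^sub>m j)"
      by (rule mtrace_comm[of _ n n]) (use C in auto)
    also have "\<dots> = mtrace (C * (?P ^\<^sub>m (l - 1 - j) * ?P ^\<^sub>m j))"
      using C by (simp add: assoc_mult_mat[of _ n n _ n _ n])
    also have "?P ^\<^sub>m (l - 1 - j) * ?P ^\<^sub>m j = ?P ^\<^sub>m (l - 1)"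
      using pow_mat_add[OF path_carrier[of s], of "l - 1 - j" j] j by simp
    finally show ?thesis unfolding weighted_pow_trace_def .
  qed
  ultimately show ?thesis unfolding pow_trace_def
    using mtrace_mult_pow_mat_deriv[OF path_carrier C one_carrier_mat, of s l] C
    by (simp add: left_mult_one_mat[of _ n n])
qed

lemma weighted_pow_trace_has_derivative:
  "(weighted_pow_trace l has_real_derivative
     - (\<Sum>j<l. mtrace (C * path s ^\<^sub>m j * C * path s ^\<^sub>m (l - 1 - j)))) (at s)"
proof -
  have "((\<lambda>s. mtrace (C * path s ^\<^sub>m l)) has_real_derivative
      mtrace (C * pow_mat_deriv n (path s) ((- 1) \<cdot>\<^sub>m C) l)) (at s)"
    by (rule mtrace_has_derivative[OF C _ _ mat_has_derivative_pow[OF _ _ path_has_derivative]])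
      (use C in auto)
  then show ?thesis unfolding weighted_pow_trace_def
    using mtrace_mult_pow_mat_deriv[OF path_carrier C C] by simp
qed

lemma weighted_pow_trace_nonneg:
  assumes "0 \<le> s" "s \<le> \<eta>"
  shows "0 \<le> weighted_pow_trace l s"
proof -
  obtain R k where R: "orth_mat n R" and eq: "path s = orth_diag n R k" and k: "\<forall>i<n. 0 \<le> k i"
    using psd_mat_orth_diag[OF path_psd[OF assms]] .
  have "psd_mat n (path s ^\<^sub>m l)" unfolding eq orth_diag_pow[OF R] psd_orth_diag_iff[OF R] using k by simp
  then show ?thesis unfolding weighted_pow_trace_def by (rule mtrace_mult_psd_nonneg[OF C0])
qed

lemma pow_trace_antimono:
  assumes "0 \<le> s" "s \<le> \<eta>"
  shows "pow_trace l s \<le> pow_trace l 0"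
proof (rule DERIV_nonpos_imp_nonincreasing[OF assms(1)])
  fix x assume "0 \<le> x" "x \<le> s"
  then have "0 \<le> weighted_pow_trace (l - 1) x" using weighted_pow_trace_nonneg assms by simp
  then show "\<exists>y. (pow_trace l has_real_derivative y) (at x) \<and> y \<le> 0"
    using pow_trace_has_derivative by (intro exI conjI) auto
qed

lemma mtrace_C_pow_C_pow:
  assumes R: "orth_mat n R" and eq: "path s = orth_diag n R k"
  shows "mtrace (C * path s ^\<^sub>m j * C * path s ^\<^sub>m i) =
    (\<Sum>a<n. k a ^ i * (\<Sum>b<n. k b ^ j * (col R b \<bullet> (C *\<^sub>v col R a))\<^sup>2))"
proof -
  note r = orth_matD[OF R]
  define M where "M = C * orth_diag n R (\<lambda>t. k t ^ j) * C"
  have M: "M \<in> carrier_mat n n" unfolding M_def using C R by simp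
  have "mtrace (C * path s ^\<^sub>m j * C * path s ^\<^sub>m i) = (\<Sum>a<n. k a ^ i * (col R a \<bullet> (M *\<^sub>v col R a)))"
    unfolding M_def eq orth_diag_pow[OF R] using mtrace_mult_orth_diag[OF R M[unfolded M_def]] .
  also have "\<dots> = (\<Sum>a<n. k a ^ i * (\<Sum>b<n. k b ^ j * (col R b \<bullet> (C *\<^sub>v col R a))\<^sup>2))"
  proof (intro sum.cong refl arg_cong[where f = "\<lambda>x. _ * x"])
    fix a assume "a \<in> {..<n}"
    then have ra: "col R a \<in> carrier_vec n" using r by simp
    have "orth_diag n R (\<lambda>t. k t ^ j) *\<^sub>v (C *\<^sub>v col R a) \<in> carrier_vec n"
      using R C ra by (auto intro!: mult_mat_vec_carrier)
    have "M *\<^sub>v col R a = (C * orth_diag n R (\<lambda>t. k t ^ j)) *\<^sub>v (C *\<^sub>v col R a)"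
      unfolding M_def by (rule assoc_mult_mat_vec) (use R C ra in auto)
    also have "\<dots> = C *\<^sub>v (orth_diag n R (\<lambda>t. k t ^ j) *\<^sub>v (C *\<^sub>v col R a))"
      by (rule assoc_mult_mat_vec) (use R C ra in auto)
    finally have "col R a \<bullet> (M *\<^sub>v col R a) = (C *\<^sub>v col R a) \<bullet> (orth_diag n R (\<lambda>t. k t ^ j) *\<^sub>v (C *\<^sub>v col R a))"
      using transpose_vec_mult_scalar[OF C \<open>orth_diag n R (\<lambda>t. k t ^ j) *\<^sub>v (C *\<^sub>v col R a) \<in> carrier_vec n\<close> ra]
        symC by simp
    also have "\<dots> = (\<Sum>b<n. k b ^ j * (col R b \<bullet> (C *\<^sub>v col R a))\<^sup>2)"
      using ra C by (intro quad_form_orth_diag[OF R]) simp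
    finally show "col R a \<bullet> (M *\<^sub>v col R a) = (\<Sum>b<n. k b ^ j * (col R b \<bullet> (C *\<^sub>v col R a))\<^sup>2)" .
  qed
  finally show ?thesis .
qed

lemma sum_mtrace_C_pow_C_pow_le:
  assumes "0 \<le> s" "s \<le> \<eta>"
  shows "(\<Sum>j<Suc l. mtrace (C * path s ^\<^sub>m j * C * path s ^\<^sub>m (l - j))) \<le> real (Suc l) * pow_trace l s"
proof -
  obtain R k where R: "orth_mat n R" and eq: "path s = orth_diag n R k" and k: "\<forall>i<n. 0 \<le> k i"
    using psd_mat_orth_diag[OF path_psd[OF assms]] .
  note r = orth_matD[OF R]
  define E where "E a b = (col R b \<bullet> (C *\<^sub>v col R a))\<^sup>2" for a b
  have E_sym: "E a b = E b a" if "a < n" "b < n" for a b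
    unfolding E_def using transpose_vec_mult_scalar[of C n n "col R a" "col R b"] C symC r that
      comm_scalar_prod[of "C *\<^sub>v col R b" n "col R a"] by simp
  have E_row: "(\<Sum>b<n. E a b) \<le> 1" if a: "a < n" for a
  proof -
    have ra: "col R a \<in> carrier_vec n" using r a by simp
    have "(\<Sum>b<n. E a b) = (C *\<^sub>v col R a) \<bullet> (C *\<^sub>v col R a)"
      unfolding E_def using sum_sq_orth_coords[OF R, of "C *\<^sub>v col R a"] C ra by simp
    also have "\<dots> \<le> col R a \<bullet> col R a" by (rule norm_mult_vec_le_of_psd_le_one[OF C0 C1 ra])
    finally show ?thesis using orth_mat_col_inner[OF R a a] by simp
  qed
  have "(\<Sum>j<Suc l. mtrace (C * path s ^\<^sub>m j * C * path s ^\<^sub>m (l - j)))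
      = (\<Sum>j<Suc l. \<Sum>a<n. \<Sum>b<n. E a b * (k a ^ (l - j) * k b ^ j))"
    unfolding mtrace_C_pow_C_pow[OF R eq] E_def by (simp add: sum_distrib_left mult_ac)
  also have "\<dots> = (\<Sum>a<n. \<Sum>b<n. \<Sum>j<Suc l. E a b * (k a ^ (l - j) * k b ^ j))"
    by (subst sum.swap) (intro sum.cong refl sum.swap)
  also have "\<dots> = (\<Sum>a<n. \<Sum>b<n. E a b * (\<Sum>j<Suc l. k a ^ (l - j) * k b ^ j))"
    by (simp only: sum_distrib_left)
  also have "\<dots> \<le> real (Suc l) * (\<Sum>a<n. k a ^ l)"
    using E_sym E_row k by (intro double_sum_mixed_pow_le) (auto simp: E_def)
  also have "(\<Sum>a<n. k a ^ l) = pow_trace l s"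
    unfolding pow_trace_def eq orth_diag_pow[OF R] mtrace_orth_diag[OF R] ..
  finally show ?thesis .
qed

lemma K0_psd: "psd_mat n K0"
proof -
  have "K0 = (K0 - \<eta> \<cdot>\<^sub>m 1\<^sub>m n) + \<eta> \<cdot>\<^sub>m 1\<^sub>m n" using K0 by (intro eq_matI) auto
  then show ?thesis using K0_ge \<eta> by (metis psd_mat_add psd_mat_smult psd_mat_one)
qed

lemma path_sym: "(path s)\<^sup>T = path s"
  using K0_psd K0 C symC unfolding path_def psd_mat_def sym_mat_def by (simp add: transpose_minus_smult_sym)

lemma path_0: "path 0 = K0"
  unfolding path_def using K0 C by (intro eq_matI) auto

lemma pow_trace_taylor_bound:
  "pow_trace m \<eta> \<le> pow_trace m 0 - \<eta> * (real m * weighted_pow_trace (m - 1) 0)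
     + \<eta>\<^sup>2 / 2 * (real m * real (m - 1) * pow_trace (m - 2) 0)"
proof -
  define f2 where "f2 s = real m * (\<Sum>j<m - 1. mtrace (C * path s ^\<^sub>m j * C * path s ^\<^sub>m (m - 1 - 1 - j)))" for s
  have d2: "((\<lambda>s. - (real m * weighted_pow_trace (m - 1) s)) has_real_derivative f2 s) (at s)" for s
    unfolding f2_def using weighted_pow_trace_has_derivative[of "m - 1" s] by (auto intro!: derivative_eq_intros)
  have "f2 s \<le> real m * real (m - 1) * pow_trace (m - 2) 0" if s: "0 \<le> s" "s \<le> \<eta>" for s
  proof (cases "m \<ge> 2")
    case False
    then have "m - 1 = 0 \<or> m = 0" by auto
    then show ?thesis unfolding f2_def by auto
  next
    case True
    then obtain l where l: "m = Suc (Suc l)" by (metis add_2_eq_Suc le_Suc_ex)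
    have "(\<Sum>j<m - 1. mtrace (C * path s ^\<^sub>m j * C * path s ^\<^sub>m (m - 1 - 1 - j))) \<le> real (Suc l) * pow_trace l s"
      using sum_mtrace_C_pow_C_pow_le[OF s, of l] l by simp
    also have "\<dots> \<le> real (Suc l) * pow_trace l 0" using pow_trace_antimono[OF s] by (intro mult_left_mono) auto
    finally show ?thesis unfolding f2_def using l by (auto intro: mult_left_mono)
  qed
  then show ?thesis
    using second_order_taylor_upper_bound[OF \<eta> pow_trace_has_derivative d2] by simp
qed

lemma mtrace_exp_path_le:
  "mtrace (mat_exp (path \<eta>)) \<le> mtrace (mat_exp K0) - \<eta> * mtrace (C * mat_exp K0) + \<eta>\<^sup>2 / 2 * mtrace (mat_exp K0)"
proof -
  have series: "(\<lambda>m. mtrace (M * path s ^\<^sub>m m) / fact m) sums mtrace (M * mat_exp (path s))"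
    if "M \<in> carrier_mat n n" for M s
    by (rule mtrace_mult_exp_series[OF path_carrier path_sym that])
  have pow_series: "(\<lambda>m. pow_trace m s / fact m) sums mtrace (mat_exp (path s))" for s
    using series[OF one_carrier_mat, of s] mat_fun_carrier[OF path_carrier path_sym, of exp]
    unfolding pow_trace_def mat_exp_def by (simp add: left_mult_one_mat[of _ n n])
  have b0: "(\<lambda>m. pow_trace m 0 / fact m) sums mtrace (mat_exp K0)"
    using pow_series[of 0] unfolding path_0 .
  have b1: "(\<lambda>m. real m * weighted_pow_trace (m - 1) 0 / fact m) sums mtrace (C * mat_exp K0)"
    using sums_fact_shift[OF series[OF C, of 0]] unfolding weighted_pow_trace_def path_0 .
  have b2: "(\<lambda>m. real m * real (m - 1) * pow_trace (m - 2) 0 / fact m) sums mtrace (mat_exp K0)"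
    using sums_fact_shift[OF sums_fact_shift[OF b0]] by (simp add: numeral_2_eq_2 mult.assoc)
  have "(\<lambda>m. pow_trace m 0 / fact m - \<eta> * (real m * weighted_pow_trace (m - 1) 0 / fact m)
      + \<eta>\<^sup>2 / 2 * (real m * real (m - 1) * pow_trace (m - 2) 0 / fact m))
      sums (mtrace (mat_exp K0) - \<eta> * mtrace (C * mat_exp K0) + \<eta>\<^sup>2 / 2 * mtrace (mat_exp K0))"
    by (intro sums_add sums_diff sums_mult b0 b1 b2)
  moreover have "pow_trace m \<eta> / fact m \<le> pow_trace m 0 / fact m - \<eta> * (real m * weighted_pow_trace (m - 1) 0 / fact m)
      + \<eta>\<^sup>2 / 2 * (real m * real (m - 1) * pow_trace (m - 2) 0 / fact m)" for m
    using divide_right_mono[OF pow_trace_taylor_bound[of m], of "fact m"] by (simp add: diff_divide_distrib add_divide_distrib)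
  ultimately show ?thesis by (intro sums_le[OF _ pow_series[of \<eta>]]) auto
qed

end

lemma orth_diag_add_scalar:
  "orth_mat n Q \<Longrightarrow> orth_diag n Q a + c \<cdot>\<^sub>m 1\<^sub>m n = orth_diag n Q (\<lambda>i. a i + c)"
  using orth_diag_add[of n Q a "\<lambda>_. c"] by (simp add: orth_diag_const)

lemma mat_exp_add_scalar:
  assumes A: "A \<in> carrier_mat n n" "A\<^sup>T = A"
  shows "mat_exp (A + c \<cdot>\<^sub>m 1\<^sub>m n) = exp c \<cdot>\<^sub>m mat_exp A"
proof -
  obtain R k where R: "orth_mat n R" and AR: "A = orth_diag n R k" using real_sym_mat_orth_diag[OF A] .
  show ?thesis unfolding AR orth_diag_add_scalar[OF R] mat_exp_def mat_fun_orth_diag[OF R] orth_diag_smult[OF R]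
    by (simp add: exp_add mult.commute)
qed

theorem mtrace_exp_ln_minus_le:
  assumes Q: "orth_mat n Q" and mu: "\<And>i. i < n \<Longrightarrow> 0 < mu i"
    and C0: "psd_mat n C" and C1: "psd_mat n (1\<^sub>m n - C)" and \<eta>: "0 \<le> \<eta>"
  shows "mtrace (mat_exp (mat_ln (orth_diag n Q mu) - \<eta> \<cdot>\<^sub>m C))
    \<le> (1 + \<eta>\<^sup>2 / 2) * (\<Sum>i<n. mu i) - \<eta> * mtrace (orth_diag n Q mu * C)"
proof -
  have C: "C \<in> carrier_mat n n" "C\<^sup>T = C" using C0 unfolding psd_mat_def sym_mat_def by auto
  define L where "L = orth_diag n Q (\<lambda>i. ln (mu i))"
  have L: "L \<in> carrier_mat n n" "L\<^sup>T = L" unfolding L_def using Q orth_diag_transpose by auto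
  define M where "M = L - \<eta> \<cdot>\<^sub>m C"
  have M: "M \<in> carrier_mat n n" "M\<^sup>T = M"
    unfolding M_def using L C by (auto simp: transpose_minus_smult_sym)
  \<comment> \<open>Shifting by a multiple of the identity makes the path from K0 to K0 - \<eta> C positive semidefinite.\<close>
  define c where "c = \<eta> + (\<Sum>i<n. \<bar>ln (mu i)\<bar>)"
  define K0 where "K0 = L + c \<cdot>\<^sub>m 1\<^sub>m n"
  have K0: "K0 \<in> carrier_mat n n" unfolding K0_def using L by simp
  have "K0 - \<eta> \<cdot>\<^sub>m 1\<^sub>m n = orth_diag n Q (\<lambda>i. ln (mu i) + (c - \<eta>))"
    unfolding orth_diag_add_scalar[OF Q, symmetric] K0_def L_def using Q by (intro eq_matI) auto
  moreover have "0 \<le> ln (mu i) + (c - \<eta>)" if "i < n" for i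
    using member_le_sum[of i "{..<n}" "\<lambda>i. \<bar>ln (mu i)\<bar>"] that unfolding c_def by auto
  ultimately have "psd_mat n (K0 - \<eta> \<cdot>\<^sub>m 1\<^sub>m n)" using psd_orth_diag_iff[OF Q] by simp
  then interpret psd_affine_path n K0 C \<eta> by unfold_locales (use K0 C0 C1 \<eta> in auto)
  have "path \<eta> = M + c \<cdot>\<^sub>m 1\<^sub>m n" unfolding path_def unfolding K0_def M_def using L C by (intro eq_matI) auto
  then have tr_path: "mtrace (mat_exp (path \<eta>)) = exp c * mtrace (mat_exp M)"
    using mat_exp_add_scalar[OF M] mat_fun_carrier[OF M] by (simp add: mat_exp_def mtrace_smult[of _ n])
  have "mat_exp K0 = exp c \<cdot>\<^sub>m orth_diag n Q mu"
    unfolding K0_def mat_exp_add_scalar[OF L] unfolding L_def mat_exp_def mat_fun_orth_diag[OF Q]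
    using mu by (auto intro!: arg_cong[where f = "\<lambda>A. exp c \<cdot>\<^sub>m A"] orth_diag_cong)
  then have tr_K0: "mtrace (mat_exp K0) = exp c * (\<Sum>i<n. mu i)"
    and tr_CK0: "mtrace (C * mat_exp K0) = exp c * mtrace (orth_diag n Q mu * C)"
    using Q C mtrace_comm[of C n n "orth_diag n Q mu"]
    by (simp_all add: mtrace_smult[of _ n] mtrace_orth_diag mult_smult_distrib[of _ n n _ n])
  have "exp c * mtrace (mat_exp M) \<le> exp c * ((1 + \<eta>\<^sup>2 / 2) * (\<Sum>i<n. mu i) - \<eta> * mtrace (orth_diag n Q mu * C))"
    using mtrace_exp_path_le unfolding tr_path tr_K0 tr_CK0 by (simp add: algebra_simps)
  then show ?thesis unfolding M_def L_def mat_ln_def mat_fun_orth_diag[OF Q] by simp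
qed

section \<open>One round of the algorithm\<close>

definition pd_density_ge :: "nat \<Rightarrow> real \<Rightarrow> real mat \<Rightarrow> bool" where
  "pd_density_ge n lo Y \<longleftrightarrow> (\<exists>Q y. orth_mat n Q \<and> Y = orth_diag n Q y \<and>
     (\<forall>i<n. 0 < y i \<and> lo \<le> y i) \<and> (\<Sum>i<n. y i) = 1)"

lemma density_matsD:
  assumes "U \<in> density_mats n"
  shows "psd_mat n U" "U \<in> carrier_mat n n" "mtrace U = 1"
  using assms unfolding density_mats_def psd_mat_def by auto

lemma pd_density_ge_density: "pd_density_ge n lo Y \<Longrightarrow> Y \<in> density_mats n"
  unfolding pd_density_ge_def density_mats_def
  by (auto simp: psd_orth_diag_iff mtrace_orth_diag less_imp_le)

lemma pd_density_ge_zero: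
  assumes Y: "Y \<in> density_mats n" and pd: "pd_mat n Y"
  shows "pd_density_ge n 0 Y"
proof -
  obtain Q y where Q: "orth_mat n Q" and YQ: "Y = orth_diag n Q y" and y: "\<forall>i<n. 0 \<le> y i"
    using psd_mat_orth_diag[OF density_matsD(1)[OF Y]] .
  have "0 < y i" if i: "i < n" for i
  proof -
    have "col Q i \<in> carrier_vec n" "col Q i \<noteq> 0\<^sub>v n"
      using orth_matD(1)[OF Q] orth_mat_col_inner[OF Q i i] i by auto
    then show ?thesis using pd orth_diag_col_quad[OF Q i] unfolding pd_mat_def YQ by fastforce
  qed
  moreover have "(\<Sum>i<n. y i) = 1" using density_matsD(3)[OF Y] unfolding YQ mtrace_orth_diag[OF Q] .
  ultimately show ?thesis unfolding pd_density_ge_def using Q YQ by (auto intro!: exI[of _ Q] exI[of _ y] less_imp_le)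
qed

lemma mtrace_mult_mat_ln_bounds:
  assumes Y: "pd_density_ge n lo Y" and lo: "0 < lo" and U: "U \<in> density_mats n"
  shows "ln lo \<le> mtrace (U * mat_ln Y)" "mtrace (U * mat_ln Y) \<le> 0"
proof -
  obtain Q y where Q: "orth_mat n Q" and YQ: "Y = orth_diag n Q y"
    and y: "\<forall>i<n. 0 < y i \<and> lo \<le> y i" and y1: "(\<Sum>i<n. y i) = 1"
    using Y unfolding pd_density_ge_def by blast
  note u = density_matsD[OF U]
  have lnY: "mat_ln Y = orth_diag n Q (\<lambda>i. ln (y i))" unfolding YQ mat_ln_def mat_fun_orth_diag[OF Q] ..
  have "ln lo = mtrace (U * orth_diag n Q (\<lambda>_. ln lo))" using mtrace_mult_orth_diag_const[OF Q u(2)] u(3) by simp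
  also have "\<dots> \<le> mtrace (U * mat_ln Y)"
    unfolding lnY using y lo by (intro mtrace_mult_orth_diag_mono[OF Q u(1)]) simp
  finally show "ln lo \<le> mtrace (U * mat_ln Y)" .
  have "y i \<le> 1" if "i < n" for i
    using member_le_sum[of i "{..<n}" y] y that y1 by (simp add: less_imp_le)
  then have "mtrace (U * mat_ln Y) \<le> mtrace (U * orth_diag n Q (\<lambda>_. 0))"
    unfolding lnY using y by (intro mtrace_mult_orth_diag_mono[OF Q u(1)]) simp
  then show "mtrace (U * mat_ln Y) \<le> 0" using mtrace_mult_orth_diag_const[OF Q u(2)] by simp
qed

lemma normalized_mat_exp_orth_diag:
  assumes n: "1 \<le> n" and M: "M \<in> carrier_mat n n" "M\<^sup>T = M"
  obtains R k where "orth_mat n R" "M = orth_diag n R k" "0 < mtrace (mat_exp M)"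
    "(1 / mtrace (mat_exp M)) \<cdot>\<^sub>m mat_exp M = orth_diag n R (\<lambda>i. exp (k i) / mtrace (mat_exp M))"
    "(\<Sum>i<n. exp (k i) / mtrace (mat_exp M)) = 1"
proof -
  obtain R k where R: "orth_mat n R" and MR: "M = orth_diag n R k" using real_sym_mat_orth_diag[OF M] .
  have Z: "mtrace (mat_exp M) = (\<Sum>i<n. exp (k i))"
    unfolding MR mat_exp_def mat_fun_orth_diag[OF R] mtrace_orth_diag[OF R] ..
  have Z_pos: "0 < mtrace (mat_exp M)" unfolding Z using n by (intro sum_pos) (auto simp: lessThan_empty_iff)
  have "(1 / mtrace (mat_exp M)) \<cdot>\<^sub>m mat_exp M = orth_diag n R (\<lambda>i. exp (k i) / mtrace (mat_exp M))"
    unfolding MR mat_exp_def mat_fun_orth_diag[OF R] orth_diag_smult[OF R] by simp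
  moreover have "(\<Sum>i<n. exp (k i) / mtrace (mat_exp M)) = 1"
    using Z Z_pos by (simp add: sum_divide_distrib[symmetric])
  ultimately show ?thesis using that R MR Z_pos by blast
qed

lemma matrix_exp_weights_step:
  assumes n: "1 \<le> n" and Y: "pd_density_ge n lo Y"
    and C0: "psd_mat n C" and C1: "psd_mat n (1\<^sub>m n - C)" and \<eta>: "0 \<le> \<eta>"
  obtains R v where "orth_mat n R" "\<forall>i<n. 0 < v i" "(\<Sum>i<n. v i) = 1"
    "(1 / mtrace (mat_exp (mat_ln Y - \<eta> \<cdot>\<^sub>m C))) \<cdot>\<^sub>m mat_exp (mat_ln Y - \<eta> \<cdot>\<^sub>m C) = orth_diag n R v"
    "\<And>U. U \<in> density_mats n \<Longrightarrow> mtrace (U * mat_ln Y) - \<eta> * mtrace (U * C) + \<eta> * mtrace (Y * C) - \<eta>\<^sup>2 / 2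
       \<le> mtrace (U * orth_diag n R (\<lambda>i. ln (v i)))"
proof -
  obtain Q y where Q: "orth_mat n Q" and YQ: "Y = orth_diag n Q y"
    and y: "\<forall>i<n. 0 < y i" and y1: "(\<Sum>i<n. y i) = 1"
    using Y unfolding pd_density_ge_def by blast
  have C: "C \<in> carrier_mat n n" "C\<^sup>T = C" using C0 unfolding psd_mat_def sym_mat_def by auto
  have lnY: "mat_ln Y = orth_diag n Q (\<lambda>i. ln (y i))" unfolding YQ mat_ln_def mat_fun_orth_diag[OF Q] ..
  define M where "M = mat_ln Y - \<eta> \<cdot>\<^sub>m C"
  have M: "M \<in> carrier_mat n n" "M\<^sup>T = M"
    unfolding M_def lnY using Q C transpose_minus_smult_sym[OF orth_diag_carrier[OF Q] C(1) orth_diag_transpose[OF Q] C(2)]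
    by auto
  define Z where "Z = mtrace (mat_exp M)"
  obtain R k where R: "orth_mat n R" and MR: "M = orth_diag n R k" and Z_pos: "0 < Z"
    and V: "(1 / Z) \<cdot>\<^sub>m mat_exp M = orth_diag n R (\<lambda>i. exp (k i) / Z)"
    and v1: "(\<Sum>i<n. exp (k i) / Z) = 1"
    using normalized_mat_exp_orth_diag[OF n M] unfolding Z_def by blast
  have "Z \<le> (1 + \<eta>\<^sup>2 / 2) * (\<Sum>i<n. y i) - \<eta> * mtrace (Y * C)"
    unfolding Z_def M_def YQ using mtrace_exp_ln_minus_le[OF Q _ C0 C1 \<eta>] y by simp
  then have lnZ: "ln Z \<le> \<eta>\<^sup>2 / 2 - \<eta> * mtrace (Y * C)"
    using ln_le_minus_one[OF Z_pos] y1 by simp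
  have "mtrace (U * mat_ln Y) - \<eta> * mtrace (U * C) + \<eta> * mtrace (Y * C) - \<eta>\<^sup>2 / 2
      \<le> mtrace (U * orth_diag n R (\<lambda>i. ln (exp (k i) / Z)))" if U: "U \<in> density_mats n" for U
  proof -
    note u = density_matsD[OF U]
    have "mtrace (U * orth_diag n R (\<lambda>i. ln (exp (k i) / Z))) = mtrace (U * orth_diag n R (\<lambda>i. - ln Z + k i))"
      using Z_pos by (simp add: ln_div)
    also have "\<dots> = mtrace (U * mat_ln Y) - \<eta> * mtrace (U * C) - ln Z"
      unfolding mtrace_mult_orth_diag_shift[OF R u(2)] MR[symmetric] M_def
      using u Q C lnY by (simp add: mtrace_mult_minus_smult[of _ n])
    finally show ?thesis using lnZ by simp
  qed
  moreover have "\<forall>i<n. 0 < exp (k i) / Z" using Z_pos by simp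
  ultimately show ?thesis using that[OF R _ v1] V unfolding Z_def M_def by blast
qed

lemma mixing_uniform_step:
  assumes n: "1 \<le> n" and R: "orth_mat n R" and v: "\<forall>i<n. 0 < v i" "(\<Sum>i<n. v i) = 1"
    and \<alpha>: "0 < \<alpha>" "\<alpha> < 1"
    and Y': "\<forall>U w. orth_mat n U \<and> orth_diag n R v = U * mat_diag n w * U\<^sup>T \<longrightarrow>
               Y' = U * mat_diag n (\<lambda>j. \<alpha> / real n + (1 - \<alpha>) * w j) * U\<^sup>T"
  shows "pd_density_ge n (\<alpha> / n) Y'"
    and "\<And>U. U \<in> density_mats n \<Longrightarrow> ln (1 - \<alpha>) + mtrace (U * orth_diag n R (\<lambda>i. ln (v i))) \<le> mtrace (U * mat_ln Y')"
proof -
  define y' where "y' j = \<alpha> / real n + (1 - \<alpha>) * v j" for j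
  have Y'R: "Y' = orth_diag n R y'" using Y' R unfolding orth_diag_def y'_def by blast
  have an: "0 < \<alpha> / real n" using n \<alpha> by simp
  have y'_ge: "(1 - \<alpha>) * v i \<le> y' i" "\<alpha> / real n \<le> y' i" if "i < n" for i
    unfolding y'_def using v that \<alpha> an by auto
  have "(\<Sum>i<n. y' i) = real n * (\<alpha> / real n) + (1 - \<alpha>) * (\<Sum>i<n. v i)"
    unfolding y'_def by (simp add: sum.distrib sum_distrib_left)
  then have "(\<Sum>i<n. y' i) = 1" using v n by simp
  then show "pd_density_ge n (\<alpha> / n) Y'" unfolding pd_density_ge_def Y'R
    using R y'_ge an by (intro exI[of _ R] exI[of _ y']) (auto intro: less_le_trans)
  fix U assume U: "U \<in> density_mats n"
  note u = density_matsD[OF U]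
  have "orth_diag n R (\<lambda>i. ln ((1 - \<alpha>) * v i)) = orth_diag n R (\<lambda>i. ln (1 - \<alpha>) + ln (v i))"
    using v \<alpha> by (intro orth_diag_cong) (simp add: ln_mult less_imp_neq[symmetric])
  then have "ln (1 - \<alpha>) + mtrace (U * orth_diag n R (\<lambda>i. ln (v i)))
      = mtrace (U * orth_diag n R (\<lambda>i. ln ((1 - \<alpha>) * v i)))"
    using mtrace_mult_orth_diag_shift[OF R u(2)] u(3) by simp
  also have "\<dots> \<le> mtrace (U * mat_ln Y')"
    unfolding Y'R mat_ln_def mat_fun_orth_diag[OF R]
  proof (rule mtrace_mult_orth_diag_mono[OF R u(1)])
    fix i assume i: "i < n"
    have "0 < (1 - \<alpha>) * v i" using v \<alpha> i by simp
    then show "ln ((1 - \<alpha>) * v i) \<le> ln (y' i)" using y'_ge(1)[OF i] by simp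
  qed
  finally show "ln (1 - \<alpha>) + mtrace (U * orth_diag n R (\<lambda>i. ln (v i))) \<le> mtrace (U * mat_ln Y')" .
qed

section \<open>Regret on every interval\<close>

locale fixed_share_mmw =
  fixes n T :: nat and C Y V :: "nat \<Rightarrow> real mat" and \<alpha> \<eta> :: real
  assumes n: "1 \<le> n" and \<alpha>: "0 < \<alpha>" "\<alpha> < 1" and \<eta>: "0 < \<eta>"
    and C0: "\<And>t. t \<in> {1..T} \<Longrightarrow> psd_mat n (C t)"
    and C1: "\<And>t. t \<in> {1..T} \<Longrightarrow> psd_mat n (1\<^sub>m n - C t)"
    and Y1: "Y 1 \<in> density_mats n" "pd_mat n (Y 1)"
    and V: "\<And>t. t \<in> {1..T} \<Longrightarrow> V (t + 1) =
      (1 / mtrace (mat_exp (mat_ln (Y t) - \<eta> \<cdot>\<^sub>m C t))) \<cdot>\<^sub>m mat_exp (mat_ln (Y t) - \<eta> \<cdot>\<^sub>m C t)"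
    and Y: "\<And>t. t \<in> {1..T} \<Longrightarrow> \<forall>U v. orth_mat n U \<and> V (t + 1) = U * mat_diag n v * U\<^sup>T \<longrightarrow>
      Y (t + 1) = U * mat_diag n (\<lambda>j. \<alpha> / real n + (1 - \<alpha>) * v j) * U\<^sup>T"
begin

lemma round_overhead_nonneg: "0 \<le> \<eta>\<^sup>2 / 2 - ln (1 - \<alpha>)"
proof -
  have "ln (1 - \<alpha>) < 0" using \<alpha> by simp
  then show ?thesis using zero_le_power2[of \<eta>] by linarith
qed

lemma one_round:
  assumes t: "t \<in> {1..T}" and Yt: "pd_density_ge n lo (Y t)"
  shows "pd_density_ge n (\<alpha> / n) (Y (t + 1))"
    and "\<And>U. U \<in> density_mats n \<Longrightarrow> \<eta> * (mtrace (Y t * C t) - mtrace (U * C t))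
      \<le> mtrace (U * mat_ln (Y (t + 1))) - mtrace (U * mat_ln (Y t)) - ln (1 - \<alpha>) + \<eta>\<^sup>2 / 2"
proof -
  obtain R v where R: "orth_mat n R" and v: "\<forall>i<n. 0 < v i" "(\<Sum>i<n. v i) = 1"
    and VR: "V (t + 1) = orth_diag n R v"
    and exp_step: "\<And>U. U \<in> density_mats n \<Longrightarrow> mtrace (U * mat_ln (Y t)) - \<eta> * mtrace (U * C t)
      + \<eta> * mtrace (Y t * C t) - \<eta>\<^sup>2 / 2 \<le> mtrace (U * orth_diag n R (\<lambda>i. ln (v i)))"
    using matrix_exp_weights_step[OF n Yt C0[OF t] C1[OF t]] \<eta> V[OF t] by (metis less_imp_le)
  note mix = mixing_uniform_step[OF n R v \<alpha> Y[OF t, unfolded VR]]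
  show "pd_density_ge n (\<alpha> / n) (Y (t + 1))" by (rule mix(1))
  fix U assume "U \<in> density_mats n"
  then show "\<eta> * (mtrace (Y t * C t) - mtrace (U * C t))
      \<le> mtrace (U * mat_ln (Y (t + 1))) - mtrace (U * mat_ln (Y t)) - ln (1 - \<alpha>) + \<eta>\<^sup>2 / 2"
    using exp_step mix(2) by (fastforce simp: algebra_simps)
qed

lemma iterate_pd_density:
  assumes "t \<in> {1..T + 1}"
  shows "pd_density_ge n (if t = 1 then 0 else \<alpha> / n) (Y t)"
  using assms
proof (induction t)
  case (Suc t)
  show ?case
  proof (cases "t = 0")
    case True then show ?thesis using pd_density_ge_zero[OF Y1] by simp
  next
    case False
    then have "t \<in> {1..T}" using Suc.prems by simp
    then show ?thesis using one_round(1) Suc by (simp del: One_nat_def) (metis Suc_eq_plus1)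
  qed
qed simp

lemma potential_step:
  assumes "t \<in> {1..T}" "U \<in> density_mats n"
  shows "\<eta> * (mtrace (Y t * C t) - mtrace (U * C t))
    \<le> mtrace (U * mat_ln (Y (t + 1))) - mtrace (U * mat_ln (Y t)) - ln (1 - \<alpha>) + \<eta>\<^sup>2 / 2"
  using one_round(2)[OF assms(1) iterate_pd_density] assms by simp

lemma regret_from_second_round_le:
  assumes r: "2 \<le> r" and s: "s \<le> T" and U: "U \<in> density_mats n"
  shows "\<eta> * (\<Sum>t=r..s. mtrace (Y t * C t) - mtrace (U * C t))
    \<le> - ln (\<alpha> / n) + real T * (\<eta>\<^sup>2 / 2 - ln (1 - \<alpha>))"
proof -
  have an: "0 < \<alpha> / n" "\<alpha> / n < 1" using n \<alpha> by (auto simp: divide_less_eq)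
  define \<phi> where "\<phi> t = mtrace (U * mat_ln (Y t))" for t
  have \<phi>: "ln (\<alpha> / n) \<le> \<phi> t" "\<phi> t \<le> 0" if "2 \<le> t" "t \<le> T + 1" for t
    using mtrace_mult_mat_ln_bounds[OF iterate_pd_density _ U, of t] that an unfolding \<phi>_def by auto
  show ?thesis
  proof (cases "r \<le> s")
    case False
    have "ln (\<alpha> / n) < 0" "0 \<le> real T * (\<eta>\<^sup>2 / 2 - ln (1 - \<alpha>))"
      using an round_overhead_nonneg by simp_all
    then show ?thesis using False by simp
  next
    case True
    have "\<eta> * (\<Sum>t=r..s. mtrace (Y t * C t) - mtrace (U * C t))
        \<le> (\<Sum>t=r..s. (\<phi> (Suc t) - \<phi> t) + (\<eta>\<^sup>2 / 2 - ln (1 - \<alpha>)))"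
      unfolding sum_distrib_left \<phi>_def using potential_step r s U
      by (intro sum_mono) (simp add: algebra_simps)
    also have "\<dots> = \<phi> (Suc s) - \<phi> r + real (Suc s - r) * (\<eta>\<^sup>2 / 2 - ln (1 - \<alpha>))"
      using True by (simp add: sum.distrib sum_Suc_diff)
    also have "\<dots> \<le> - ln (\<alpha> / n) + real T * (\<eta>\<^sup>2 / 2 - ln (1 - \<alpha>))"
      using \<phi>[of "Suc s"] \<phi>[of r] r s True round_overhead_nonneg
      by (intro add_mono mult_right_mono) auto
    finally show ?thesis .
  qed
qed

theorem regret_le:
  assumes rs: "1 \<le> r" "r \<le> s" "s \<le> T" and U: "U \<in> density_mats n"
  shows "(\<Sum>t=r..s. mtrace (Y t * C t)) - (\<Sum>t=r..s. mtrace (U * C t))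
    \<le> 1 + (- ln (\<alpha> / n) + real T * (\<eta>\<^sup>2 / 2 - ln (1 - \<alpha>))) / \<eta>"
proof -
  define a where "a t = mtrace (Y t * C t) - mtrace (U * C t)" for t
  have tail: "(\<Sum>t=r'..s. a t) \<le> (- ln (\<alpha> / n) + real T * (\<eta>\<^sup>2 / 2 - ln (1 - \<alpha>))) / \<eta>"
    if "2 \<le> r'" for r'
    using regret_from_second_round_le[OF that rs(3) U] \<eta> unfolding a_def by (simp add: field_simps)
  \<comment> \<open>The first round is handled separately: Y 1 need not have eigenvalues bounded away from 0.\<close>
  have "a 1 \<le> 1"
  proof -
    have "1 \<in> {1..T}" using rs by simp
    then have "mtrace (Y 1 * C 1) \<le> 1" "0 \<le> mtrace (U * C 1)"
      using mtrace_mult_le_mtrace[OF density_matsD(1)[OF Y1(1)] _ C1] density_matsD[OF Y1(1)]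
        mtrace_mult_psd_nonneg[OF density_matsD(1)[OF U] C0] C0 unfolding psd_mat_def by auto
    then show ?thesis unfolding a_def by simp
  qed
  moreover have "0 \<le> (- ln (\<alpha> / n) + real T * (\<eta>\<^sup>2 / 2 - ln (1 - \<alpha>))) / \<eta>"
    using n \<alpha> \<eta> round_overhead_nonneg
    by (intro divide_nonneg_pos add_nonneg_nonneg mult_nonneg_nonneg) (auto simp: divide_le_eq)
  ultimately have "(\<Sum>t=r..s. a t) \<le> 1 + (- ln (\<alpha> / n) + real T * (\<eta>\<^sup>2 / 2 - ln (1 - \<alpha>))) / \<eta>"
    using tail[of r] tail[of 2] rs by (cases "r = 1") (auto simp: sum.atLeast_Suc_atMost numeral_2_eq_2)
  then show ?thesis unfolding a_def by (simp add: sum_subtractf)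
qed

end

lemma density_mats_nonempty:
  assumes "1 \<le> n"
  shows "orth_diag n (1\<^sub>m n) (\<lambda>_. 1 / real n) \<in> density_mats n"
proof -
  have "orth_mat n (1\<^sub>m n)" unfolding orth_mat_def by simp
  then have "pd_density_ge n 0 (orth_diag n (1\<^sub>m n) (\<lambda>_. 1 / real n))"
    unfolding pd_density_ge_def using assms by (intro exI[of _ "1\<^sub>m n"] exI[of _ "\<lambda>_. 1 / real n"]) auto
  then show ?thesis by (rule pd_density_ge_density)
qed

lemma sqrt_regret_arith:
  fixes L T :: real
  assumes L: "1 / 2 \<le> L" and T: "1 \<le> T"
  shows "1 + (3 / 2 * L + 1) / (sqrt L / sqrt T) \<le> 6 * sqrt (T * L)"
proof -
  define x y where "x = sqrt T" and "y = sqrt L"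
  have x: "1 \<le> x" and y: "0 < y" and L_y: "L = y\<^sup>2"
    unfolding x_def y_def using L T by auto
  have xy: "sqrt (T * L) = x * y" unfolding x_def y_def by (simp add: real_sqrt_mult)
  have "(3 / 2 * L + 1) / (y / x) = 3 / 2 * (x * y) + (x * y) / L"
    using x y unfolding L_y by (simp add: field_simps power2_eq_square)
  also have "(x * y) / L \<le> 2 * (x * y)"
    using L x y by (simp add: divide_le_eq mult_pos_pos)
  also have "1 \<le> 2 * (x * y)"
  proof -
    have "1 / 2 \<le> y"
    proof (rule ccontr)
      assume "\<not> 1 / 2 \<le> y"
      then have "y\<^sup>2 < (1 / 2)\<^sup>2" using y by (intro power_strict_mono) auto
      then show False using L unfolding L_y by (simp add: power2_eq_square)
    qed
    then show ?thesis using mult_right_mono[OF x, of y] y by linarith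
  qed
  ultimately show ?thesis unfolding xy x_def y_def by linarith
qed

lemma tuned_parameters_regret_bound:
  fixes n T :: nat
  assumes n: "1 \<le> n" and T: "1 \<le> T"
  defines "L \<equiv> ln (real n * (1 + real T))"
    and "\<alpha> \<equiv> 1 / (real T + 1)" and "\<eta> \<equiv> sqrt (ln (real n * (1 + real T))) / sqrt (real T)"
  shows "0 < \<eta>"
    and "1 + (- ln (\<alpha> / n) + real T * (\<eta>\<^sup>2 / 2 - ln (1 - \<alpha>))) / \<eta> \<le> 6 * sqrt (real T * L)"
proof -
  have L: "1 / 2 \<le> L"
  proof -
    have "ln (1 / 2) \<le> 1 / 2 - (1 :: real)" by (rule ln_le_minus_one) simp
    moreover have "ln 2 \<le> L" unfolding L_def using n T mult_mono[of 1 "real n" 2 "1 + real T"] by simp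
    ultimately show ?thesis by (simp add: ln_div)
  qed
  then show "0 < \<eta>" unfolding \<eta>_def L_def[symmetric] using T by simp
  have "- ln (\<alpha> / n) = L" unfolding \<alpha>_def L_def using n by (simp add: ln_div field_simps)
  moreover have "real T * - ln (1 - \<alpha>) \<le> real T * (1 / real T)"
    using ln_add_one_self_le_self[of "1 / real T"] T unfolding \<alpha>_def
    by (intro mult_left_mono) (simp_all add: ln_div field_simps)
  moreover have "real T * \<eta>\<^sup>2 = L" unfolding \<eta>_def L_def[symmetric] using L T by (simp add: power_divide)
  ultimately have "- ln (\<alpha> / n) + real T * (\<eta>\<^sup>2 / 2 - ln (1 - \<alpha>)) \<le> 3 / 2 * L + 1"
    using T by (simp add: algebra_simps)
  then have "(- ln (\<alpha> / n) + real T * (\<eta>\<^sup>2 / 2 - ln (1 - \<alpha>))) / \<eta> \<le> (3 / 2 * L + 1) / \<eta>"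
    using \<open>0 < \<eta>\<close> by (simp add: divide_right_mono)
  moreover have "1 + (3 / 2 * L + 1) / \<eta> \<le> 6 * sqrt (real T * L)"
    using sqrt_regret_arith[OF L, of "real T"] T unfolding \<eta>_def L_def[symmetric] by simp
  ultimately show "1 + (- ln (\<alpha> / n) + real T * (\<eta>\<^sup>2 / 2 - ln (1 - \<alpha>))) / \<eta> \<le> 6 * sqrt (real T * L)"
    by linarith
qed

lemma loewner_le_zero_one_iff:
  "loewner_le n (0\<^sub>m n n) A \<and> loewner_le n A (1\<^sub>m n) \<longleftrightarrow> psd_mat n A \<and> psd_mat n (1\<^sub>m n - A)"
proof -
  have "A \<in> carrier_mat n n \<Longrightarrow> A - 0\<^sub>m n n = A" by (intro eq_matI) auto
  then show ?thesis unfolding loewner_le_def psd_mat_def by auto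
qed

theorem theorem4p5:
  "\<exists>c::real. \<forall>(n::nat) (T::nat) (C::nat \<Rightarrow> real mat) (Y::nat \<Rightarrow> real mat) (V::nat \<Rightarrow> real mat).
     n \<ge> 1 \<longrightarrow> T \<ge> 1 \<longrightarrow>
     (\<forall>t\<in>{1..T}. C t \<in> carrier_mat n n \<and> sym_mat (C t) \<and>
                  loewner_le n (0\<^sub>m n n) (C t) \<and> loewner_le n (C t) (1\<^sub>m n)) \<longrightarrow>
     Y 1 \<in> density_mats n \<longrightarrow> pd_mat n (Y 1) \<longrightarrow>
     (let \<alpha> = 1 / (real T + 1);
          \<eta> = sqrt (ln (real n * (1 + real T))) / sqrt (real T)
      in (\<forall>t\<in>{1..T}.
            V (t + 1) = (1 / mtrace (mat_exp (mat_ln (Y t) - \<eta> \<cdot>\<^sub>m C t)))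
                          \<cdot>\<^sub>m mat_exp (mat_ln (Y t) - \<eta> \<cdot>\<^sub>m C t) \<and>
            (\<forall>U v. orth_mat n U \<and> V (t + 1) = U * mat_diag n v * U\<^sup>T \<longrightarrow>
               Y (t + 1) = U * mat_diag n (\<lambda>j. \<alpha> / real n + (1 - \<alpha>) * v j) * U\<^sup>T))) \<longrightarrow>
     (\<forall>r s. 1 \<le> r \<and> r \<le> s \<and> s \<le> T \<longrightarrow>
        (\<Sum>t=r..s. mtrace (Y t * C t))
          - (INF U\<in>density_mats n. \<Sum>t=r..s. mtrace (U * C t))
        \<le> c * sqrt (real T * ln (real n * (1 + real T))))"
proof (intro exI[of _ 6] allI impI)
  fix n T :: nat and C Y V :: "nat \<Rightarrow> real mat" and r s :: nat
  assume n: "n \<ge> 1" and T: "T \<ge> 1"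
    and C: "\<forall>t\<in>{1..T}. C t \<in> carrier_mat n n \<and> sym_mat (C t) \<and>
                  loewner_le n (0\<^sub>m n n) (C t) \<and> loewner_le n (C t) (1\<^sub>m n)"
    and Y1: "Y 1 \<in> density_mats n" "pd_mat n (Y 1)"
    and upd: "let \<alpha> = 1 / (real T + 1); \<eta> = sqrt (ln (real n * (1 + real T))) / sqrt (real T)
      in (\<forall>t\<in>{1..T}. V (t + 1) = (1 / mtrace (mat_exp (mat_ln (Y t) - \<eta> \<cdot>\<^sub>m C t)))
                          \<cdot>\<^sub>m mat_exp (mat_ln (Y t) - \<eta> \<cdot>\<^sub>m C t) \<and>
            (\<forall>U v. orth_mat n U \<and> V (t + 1) = U * mat_diag n v * U\<^sup>T \<longrightarrow>
               Y (t + 1) = U * mat_diag n (\<lambda>j. \<alpha> / real n + (1 - \<alpha>) * v j) * U\<^sup>T))"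
    and rs: "1 \<le> r \<and> r \<le> s \<and> s \<le> T"
  define L where "L = ln (real n * (1 + real T))"
  define \<alpha> where "\<alpha> = 1 / (real T + 1)"
  define \<eta> where "\<eta> = sqrt (ln (real n * (1 + real T))) / sqrt (real T)"
  note tuned = tuned_parameters_regret_bound[OF n T, folded \<eta>_def \<alpha>_def, folded L_def]
  interpret fixed_share_mmw n T C Y V \<alpha> \<eta>
    using n T C Y1 upd tuned(1) unfolding Let_def \<alpha>_def \<eta>_def
    by unfold_locales (auto simp: loewner_le_zero_one_iff)
  have "(\<Sum>t=r..s. mtrace (Y t * C t)) - 6 * sqrt (real T * L) \<le> (\<Sum>t=r..s. mtrace (U * C t))"
    if "U \<in> density_mats n" for U
    using regret_le[of r s U] rs that tuned(2) by linarith
  then have "(\<Sum>t=r..s. mtrace (Y t * C t)) - 6 * sqrt (real T * L)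
      \<le> (INF U\<in>density_mats n. \<Sum>t=r..s. mtrace (U * C t))"
    using density_mats_nonempty[OF n] by (intro cINF_greatest) blast+
  then show "(\<Sum>t=r..s. mtrace (Y t * C t)) - (INF U\<in>density_mats n. \<Sum>t=r..s. mtrace (U * C t))
      \<le> 6 * sqrt (real T * ln (real n * (1 + real T)))" unfolding L_def by simp
qed

end
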